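(* Let $(b,c)$ be a locally finite connected graph over a countable set $X$ with a nilpotent cocompact group action of $G$ such that $H_{b,c}$ is $G$-invariant. Then there exists a normal subgroup $R\subseteq G$ such that every $f\in\mathcal{H}^+_\mathbb{R}$ is $R$-invariant, $G/R\cong\mathbb{Z}^d$ for some $d\in\mathbb{N}_0$, and $R$ contains the stabiliser $\mathrm{Stab}(x)=\{g\in G:gx=x\}$ of every $x\in X$.
   Context: A graph over $X$ is $(b,c)$ with $b:X\times X\to[0,\infty)$, $c:X\to\mathbb{R}$, $\sum_yb(x,y)<\infty$ ($b$ need not be symmetric); locally finite: each $x$ has finitely many $y$ with $b(x,y)>0$; connected: any two points are joined by a finite sequence $y_1,\dots,y_n$ with $b(y_i,y_{i+1})>0$. $H_{b,c}f(x)=\sum_yb(x,y)(f(x)-f(y))+c(x)f(x)$ on $\mathrm{Dom}(H)=\{f:\sum_yb(x,y)|f(y)|<\infty\ \forall x\}$. $\mathcal{H}^+_\mathbb{R}$ is the set of all nonnegative, not identically zero $f\in\mathrm{Dom}(H)$ with $(H-\lambda)f=0$ for some $\lambda\in\mathbb{R}$. $T_gf(x)=f(g^{-1}x)$; cocompact: $GV=X$ for some finite $V$; $H$ is $G$-invariant if $T_g$ preserves $\mathrm{Dom}(H)$ and $HT_g=T_gH$; $f$ is $R$-invariant if $T_rf=f$ for all $r\in R$. *)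

theory Defs
  imports "HOL-Analysis.Analysis" "HOL-Algebra.Free_Abelian_Groups" "HOL-Algebra.Group_Action"
begin

primrec lower_central :: "('g, 'm) monoid_scheme \<Rightarrow> nat \<Rightarrow> 'g set" where
  "lower_central G 0 = carrier G"
| "lower_central G (Suc n) =
     generate G {x \<otimes>\<^bsub>G\<^esub> y \<otimes>\<^bsub>G\<^esub> inv\<^bsub>G\<^esub> x \<otimes>\<^bsub>G\<^esub> inv\<^bsub>G\<^esub> y | x y.
                   x \<in> carrier G \<and> y \<in> lower_central G n}"

definition nilpotent_group :: "('g, 'm) monoid_scheme \<Rightarrow> bool" where
  "nilpotent_group G \<longleftrightarrow> group G \<and> (\<exists>n. lower_central G n = {\<one>\<^bsub>G\<^esub>})"

definition graph :: "('x \<Rightarrow> 'x \<Rightarrow> real) \<Rightarrow> ('x \<Rightarrow> real) \<Rightarrow> bool" where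
  "graph b c \<longleftrightarrow> (\<forall>x y. 0 \<le> b x y) \<and> (\<forall>x. (\<lambda>y. b x y) summable_on UNIV)"

definition locally_finite :: "('x \<Rightarrow> 'x \<Rightarrow> real) \<Rightarrow> bool" where
  "locally_finite b \<longleftrightarrow> (\<forall>x. finite {y. b x y > 0})"

definition graph_connected :: "('x \<Rightarrow> 'x \<Rightarrow> real) \<Rightarrow> bool" where
  "graph_connected b \<longleftrightarrow> (\<forall>x y. (\<lambda>u v. b u v > 0)\<^sup>*\<^sup>* x y)"

definition dom_H :: "('x \<Rightarrow> 'x \<Rightarrow> real) \<Rightarrow> ('x \<Rightarrow> real) set" where
  "dom_H b = {f. \<forall>x. (\<lambda>y. b x y * \<bar>f y\<bar>) summable_on UNIV}"

definition H_op :: "('x \<Rightarrow> 'x \<Rightarrow> real) \<Rightarrow> ('x \<Rightarrow> real) \<Rightarrow> ('x \<Rightarrow> real) \<Rightarrow> 'x \<Rightarrow> real" where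
  "H_op b c f x = (\<Sum>\<^sub>\<infinity>y. b x y * (f x - f y)) + c x * f x"

definition pos_eigenfunctions :: "('x \<Rightarrow> 'x \<Rightarrow> real) \<Rightarrow> ('x \<Rightarrow> real) \<Rightarrow> ('x \<Rightarrow> real) set" where
  "pos_eigenfunctions b c =
     {f \<in> dom_H b. (\<forall>x. 0 \<le> f x) \<and> f \<noteq> (\<lambda>_. 0) \<and> (\<exists>lam::real. \<forall>x. H_op b c f x - lam * f x = 0)}"

definition transl :: "('g, 'm) monoid_scheme \<Rightarrow> ('g \<Rightarrow> 'x \<Rightarrow> 'x) \<Rightarrow> 'g \<Rightarrow> ('x \<Rightarrow> real) \<Rightarrow> 'x \<Rightarrow> real" where
  "transl G \<phi> g f x = f (\<phi> (inv\<^bsub>G\<^esub> g) x)"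

definition cocompact :: "('g, 'm) monoid_scheme \<Rightarrow> ('g \<Rightarrow> 'x \<Rightarrow> 'x) \<Rightarrow> bool" where
  "cocompact G \<phi> \<longleftrightarrow> (\<exists>V. finite V \<and> (\<Union>g\<in>carrier G. \<phi> g ` V) = UNIV)"

definition G_invariant :: "('g, 'm) monoid_scheme \<Rightarrow> ('g \<Rightarrow> 'x \<Rightarrow> 'x) \<Rightarrow> ('x \<Rightarrow> 'x \<Rightarrow> real) \<Rightarrow> ('x \<Rightarrow> real) \<Rightarrow> bool" where
  "G_invariant G \<phi> b c \<longleftrightarrow>
     (\<forall>g\<in>carrier G. \<forall>f\<in>dom_H b. transl G \<phi> g f \<in> dom_H b \<and>
        H_op b c (transl G \<phi> g f) = transl G \<phi> g (H_op b c f))"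

definition R_invariant :: "('g, 'm) monoid_scheme \<Rightarrow> ('g \<Rightarrow> 'x \<Rightarrow> 'x) \<Rightarrow> 'g set \<Rightarrow> ('x \<Rightarrow> real) \<Rightarrow> bool" where
  "R_invariant G \<phi> R f \<longleftrightarrow> (\<forall>r\<in>R. transl G \<phi> r f = f)"

end

theory Submission
  imports Defs "HOL-Library.Diagonal_Subsequence"
begin

(* For each lambda let K be the subgroup of G fixing every positive lambda-eigenfunction; the point is
   that R lies in every K.  The analytic core: if r is central modulo K and T_r has no positive
   eigenfunction with eigenvalue other than 1, then r is in K.  Indeed, by cocompactness, Harnack's
   inequality and a diagonal argument, the supremum M of T_r f / f is an eigenvalue of T_r on a limit of
   normalised translates of f, whence T_r f <= f; the same for r^-1 gives T_r f = f.  A commutator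
   w = [x,y] central modulo K has eigenvalues 1: since [x^n,y^n] = w^(n^2) modulo K while Harnack bounds
   translations by words of length 4n exponentially in n, an eigenvalue alpha satisfies
   alpha^(n^2) <= D^n.  Descending along the lower central series gives [G,G] <= K, so every element
   is central modulo K, and stabilisers and roots of elements of K lie in K.  Hence the isolator R of
   the subgroup generated by [G,G] and the stabilisers lies in K.  G/R is abelian and torsion free, and
   finitely generated because cocompactness and connectedness make G generated by finitely many
   elements together with the stabilisers; so G/R is free abelian of finite rank. *)

section \<open>Commutators and the lower central series\<close>

abbreviation commutator :: "('g, 'm) monoid_scheme \<Rightarrow> 'g \<Rightarrow> 'g \<Rightarrow> 'g" where
  "commutator G x y \<equiv> x \<otimes>\<^bsub>G\<^esub> y \<otimes>\<^bsub>G\<^esub> inv\<^bsub>G\<^esub> x \<otimes>\<^bsub>G\<^esub> inv\<^bsub>G\<^esub> y"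

definition central_mod :: "('g, 'm) monoid_scheme \<Rightarrow> 'g set \<Rightarrow> 'g \<Rightarrow> bool" where
  "central_mod G K w \<longleftrightarrow> (\<forall>g\<in>carrier G. commutator G g w \<in> K)"

context group
begin

lemma inv_mult_cancel_left [simp]: "x \<in> carrier G \<Longrightarrow> y \<in> carrier G \<Longrightarrow> inv x \<otimes> (x \<otimes> y) = y"
  by (simp add: m_assoc[symmetric])

lemma mult_inv_cancel_left [simp]: "x \<in> carrier G \<Longrightarrow> y \<in> carrier G \<Longrightarrow> x \<otimes> (inv x \<otimes> y) = y"
  by (simp add: m_assoc[symmetric])

lemma commutator_eq_one_iff:
  assumes "a \<in> carrier G" "b \<in> carrier G"
  shows "commutator G a b = \<one> \<longleftrightarrow> a \<otimes> b = b \<otimes> a"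
proof
  assume "commutator G a b = \<one>"
  then have "commutator G a b \<otimes> b \<otimes> a = b \<otimes> a" using assms by simp
  then show "a \<otimes> b = b \<otimes> a" using assms by (simp add: m_assoc)
next
  assume "a \<otimes> b = b \<otimes> a"
  then show "commutator G a b = \<one>" using assms by (simp add: m_assoc)
qed

lemma conj_nat_pow:
  assumes "x \<in> carrier G" "z \<in> carrier G"
  shows "x \<otimes> z [^] (m::nat) \<otimes> inv x = (x \<otimes> z \<otimes> inv x) [^] m"
proof (induction m)
  case 0
  then show ?case using assms by simp
next
  case (Suc m)
  have "x \<otimes> z [^] Suc m \<otimes> inv x = (x \<otimes> z [^] m \<otimes> inv x) \<otimes> (x \<otimes> z \<otimes> inv x)"
    using assms by (simp add: m_assoc nat_pow_Suc)
  also have "\<dots> = (x \<otimes> z \<otimes> inv x) [^] m \<otimes> (x \<otimes> z \<otimes> inv x)" using Suc by simp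
  finally show ?case by (simp add: nat_pow_Suc)
qed

lemma commutator_nat_pow_nat_pow:
  assumes x: "x \<in> carrier G" and y: "y \<in> carrier G"
    and wx: "commutator G x y \<otimes> x = x \<otimes> commutator G x y"
    and wy: "commutator G x y \<otimes> y = y \<otimes> commutator G x y"
  shows "commutator G (x [^] n) (y [^] n) = commutator G x y [^] ((n::nat) * n)"
proof -
  define w where "w = commutator G x y"
  have w: "w \<in> carrier G" using x y by (simp add: w_def)
  have conj_y: "x \<otimes> y [^] m \<otimes> inv x = w [^] m \<otimes> y [^] m" for m :: nat
  proof -
    have "x \<otimes> y \<otimes> inv x = w \<otimes> y" using x y by (simp add: w_def m_assoc)
    then show ?thesis
      using conj_nat_pow[OF x y, of m] pow_mult_distrib[OF wy[folded w_def] w y] by simp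
  qed
  have "x [^] k \<otimes> y [^] m \<otimes> inv (x [^] k) = w [^] (k * m) \<otimes> y [^] m" for k m :: nat
  proof (induction k)
    case 0
    then show ?case using y by simp
  next
    case (Suc k)
    have "x \<otimes> w [^] m = w [^] m \<otimes> x"
      using group_commutes_pow[OF wx[folded w_def] w x] by simp
    then have wxk: "x [^] k \<otimes> w [^] m = w [^] m \<otimes> x [^] k"
      using group_commutes_pow x w by simp
    have "x [^] Suc k \<otimes> y [^] m \<otimes> inv (x [^] Suc k)
        = x [^] k \<otimes> (x \<otimes> y [^] m \<otimes> inv x) \<otimes> inv (x [^] k)"
      using x y by (simp add: nat_pow_Suc inv_mult_group m_assoc)
    also have "\<dots> = w [^] m \<otimes> (x [^] k \<otimes> y [^] m \<otimes> inv (x [^] k))"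
      using x y w wxk by (simp add: conj_y m_assoc[symmetric])
    also have "\<dots> = w [^] (Suc k * m) \<otimes> y [^] m"
      using Suc w y by (simp add: m_assoc[symmetric] nat_pow_mult add.commute)
    finally show ?case .
  qed
  then show ?thesis using w y by (simp add: w_def[symmetric] m_assoc)
qed

lemma rcos_eq_iff:
  assumes "subgroup H G" "x \<in> carrier G" "y \<in> carrier G"
  shows "H #> x = H #> y \<longleftrightarrow> x \<otimes> inv y \<in> H"
proof
  assume "H #> x = H #> y"
  then have "x \<in> H #> y" using rcos_self[OF assms(2,1)] by simp
  then show "x \<otimes> inv y \<in> H" using subgroup.rcos_module_imp[OF assms(1) is_group assms(3)] by blast
next
  assume "x \<otimes> inv y \<in> H"
  then have "x \<in> H #> y" using subgroup.rcos_module_rev[OF assms(1) is_group assms(3,2)] by blast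
  then show "H #> x = H #> y" using repr_independence[OF _ assms(3,1)] by simp
qed

lemma rcos_eq_self_iff:
  assumes "subgroup H G" "x \<in> carrier G"
  shows "H #> x = H \<longleftrightarrow> x \<in> H"
  using coset_join1[OF _ assms(2,1)] coset_join2[OF assms(2,1)] by blast

lemma lower_central_subset_carrier: "lower_central G j \<subseteq> carrier G"
proof (induction j)
  case (Suc j)
  then show ?case by (auto intro!: generate_incl)
qed simp

lemma commutator_in_lower_central:
  "x \<in> carrier G \<Longrightarrow> y \<in> lower_central G j \<Longrightarrow> commutator G x y \<in> lower_central G (Suc j)"
  by (auto intro: generate.incl)

lemma lower_central_Suc_subset:
  assumes "subgroup K G" "\<And>x y. x \<in> carrier G \<Longrightarrow> y \<in> lower_central G j \<Longrightarrow> commutator G x y \<in> K"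
  shows "lower_central G (Suc j) \<subseteq> K"
  unfolding lower_central.simps using assms by (intro generate_subgroup_incl) auto

lemma nilpotent_lower_central_one_subset:
  assumes nil: "nilpotent_group G" and K: "subgroup K G"
    and central_comm: "\<And>x y. x \<in> carrier G \<Longrightarrow> y \<in> carrier G \<Longrightarrow>
       central_mod G K (commutator G x y) \<Longrightarrow> commutator G x y \<in> K"
  shows "lower_central G 1 \<subseteq> K"
proof -
  obtain n where n: "lower_central G n = {\<one>}" using nil by (auto simp: nilpotent_group_def)
  have step: "lower_central G (Suc j) \<subseteq> K" if "lower_central G (Suc (Suc j)) \<subseteq> K" for j
  proof (rule lower_central_Suc_subset[OF K])
    fix x y assume x: "x \<in> carrier G" and y: "y \<in> lower_central G j"
    have "commutator G x y \<in> lower_central G (Suc j)" by (rule commutator_in_lower_central[OF x y])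
    then have "central_mod G K (commutator G x y)"
      unfolding central_mod_def using that commutator_in_lower_central by blast
    then show "commutator G x y \<in> K"
      using central_comm x y lower_central_subset_carrier by blast
  qed
  have "lower_central G (Suc (n - i)) \<subseteq> K" for i
  proof (induction i)
    case 0
    show ?case using n subgroup.one_closed[OF K] by (intro lower_central_Suc_subset[OF K]) auto
  next
    case (Suc i)
    then show ?case using step[of "n - Suc i"] by (cases "i < n") (auto simp: Suc_diff_Suc)
  qed
  from this[of n] show ?thesis by simp
qed

lemma normal_if_lower_central_subset:
  assumes H: "subgroup H G" and C: "lower_central G 1 \<subseteq> H"
  shows "H \<lhd> G"
  unfolding normal_inv_iff
proof (intro conjI H ballI)
  fix x h assume x: "x \<in> carrier G" and h: "h \<in> H"
  have hC: "h \<in> carrier G" by (rule subgroup.mem_carrier[OF H h])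
  have "commutator G x h \<in> H" using C commutator_in_lower_central[OF x, of h 0] hC by auto
  then have "commutator G x h \<otimes> h \<in> H" using h by (rule subgroup.m_closed[OF H])
  then show "x \<otimes> h \<otimes> inv x \<in> H" using x hC by (simp add: m_assoc)
qed

lemma comm_group_FactGroup_if_lower_central_subset:
  assumes H: "subgroup H G" and C: "lower_central G 1 \<subseteq> H"
  shows "comm_group (G Mod H)"
proof (rule group.group_comm_groupI)
  have N: "H \<lhd> G" by (rule normal_if_lower_central_subset[OF H C])
  show "group (G Mod H)" by (rule normal.factorgroup_is_group[OF N])
  fix p q assume "p \<in> carrier (G Mod H)" "q \<in> carrier (G Mod H)"
  then obtain a b where ab: "a \<in> carrier G" "b \<in> carrier G" "p = H #> a" "q = H #> b"
    by (auto simp: carrier_FactGroup)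
  have "a \<otimes> b \<otimes> inv (b \<otimes> a) = commutator G a b" using ab by (simp add: inv_mult_group m_assoc)
  then have "a \<otimes> b \<otimes> inv (b \<otimes> a) \<in> H" using commutator_in_lower_central[OF ab(1), of b 0] ab C by auto
  then have "H #> (a \<otimes> b) = H #> (b \<otimes> a)" using rcos_eq_iff[OF H] ab by simp
  then show "p \<otimes>\<^bsub>G Mod H\<^esub> q = q \<otimes>\<^bsub>G Mod H\<^esub> p" using ab normal.rcos_sum[OF N] by simp
qed

end

lemma (in normal) group_hom_r_coset: "group_hom G (G Mod H) (\<lambda>a. H #> a)"
  using r_coset_hom_Mod is_group factorgroup_is_group by (simp add: group_hom_def group_hom_axioms_def)

context normal
begin

lemma central_mod_inv:
  assumes r: "r \<in> carrier G" and cen: "central_mod G H r"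
  shows "central_mod G H (inv r)"
  unfolding central_mod_def
proof
  fix g assume g: "g \<in> carrier G"
  have "commutator G g (inv r) = inv r \<otimes> inv (commutator G g r) \<otimes> inv (inv r)"
    using g r by (simp add: inv_mult_group m_assoc)
  moreover have "inv (commutator G g r) \<in> H"
    using cen g by (simp add: central_mod_def subgroup.m_inv_closed[OF subgroup_axioms])
  ultimately show "commutator G g (inv r) \<in> H" using inv_op_closed2[of "inv r"] r by simp
qed

lemma FactGroup_commute_if_central_mod:
  assumes w: "w \<in> carrier G" and cen: "central_mod G H w" and g: "g \<in> carrier G"
  shows "(H #> g) \<otimes>\<^bsub>G Mod H\<^esub> (H #> w) = (H #> w) \<otimes>\<^bsub>G Mod H\<^esub> (H #> g)"
proof -
  interpret Q: group "G Mod H" by (rule factorgroup_is_group)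
  interpret p: group_hom G "G Mod H" "\<lambda>a. H #> a" by (rule group_hom_r_coset)
  have "commutator (G Mod H) (H #> g) (H #> w) = H #> commutator G g w"
    using g w by (simp del: mult_FactGroup)
  also have "\<dots> = \<one>\<^bsub>G Mod H\<^esub>" using cen g rcos_const[OF is_group] by (simp add: central_mod_def)
  finally show ?thesis using g w Q.commutator_eq_one_iff by simp
qed

lemma rcos_commutator_nat_pow:
  assumes x: "x \<in> carrier G" and y: "y \<in> carrier G" and cen: "central_mod G H (commutator G x y)"
  shows "H #> commutator G (x [^] n) (y [^] n) = H #> commutator G x y [^] ((n::nat) * n)"
proof -
  interpret Q: group "G Mod H" by (rule factorgroup_is_group)
  interpret p: group_hom G "G Mod H" "\<lambda>a. H #> a" by (rule group_hom_r_coset)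
  have "commutator (G Mod H) (H #> x) (H #> y) \<otimes>\<^bsub>G Mod H\<^esub> (H #> z)
      = (H #> z) \<otimes>\<^bsub>G Mod H\<^esub> commutator (G Mod H) (H #> x) (H #> y)" if "z \<in> carrier G" for z
    using FactGroup_commute_if_central_mod[OF _ cen that] x y by simp
  then have "commutator (G Mod H) ((H #> x) [^]\<^bsub>G Mod H\<^esub> n) ((H #> y) [^]\<^bsub>G Mod H\<^esub> n)
      = commutator (G Mod H) (H #> x) (H #> y) [^]\<^bsub>G Mod H\<^esub> (n * n)"
    using x y by (intro Q.commutator_nat_pow_nat_pow) auto
  then show ?thesis using x y by (simp add: p.hom_nat_pow)
qed

end

section \<open>Isolators\<close>

definition isolator :: "('g, 'm) monoid_scheme \<Rightarrow> 'g set \<Rightarrow> 'g set" where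
  "isolator G H = {g \<in> carrier G. \<exists>n::nat. n > 0 \<and> g [^]\<^bsub>G\<^esub> n \<in> H}"

definition torsion_free :: "('g, 'm) monoid_scheme \<Rightarrow> bool" where
  "torsion_free G \<longleftrightarrow> (\<forall>x\<in>carrier G. \<forall>n::nat. n > 0 \<longrightarrow> x [^]\<^bsub>G\<^esub> n = \<one>\<^bsub>G\<^esub> \<longrightarrow> x = \<one>\<^bsub>G\<^esub>)"

lemma isolator_mono: "H \<subseteq> K \<Longrightarrow> isolator G H \<subseteq> isolator G K"
  by (auto simp: isolator_def)

lemma (in group) isolator_root_closed:
  assumes "g \<in> carrier G" "n > 0" "g [^] (n::nat) \<in> isolator G H"
  shows "g \<in> isolator G H"
proof -
  obtain m :: nat where "m > 0" "(g [^] n) [^] m \<in> H" using assms(3) by (auto simp: isolator_def)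
  then show ?thesis using assms(1,2) by (auto simp: isolator_def nat_pow_pow intro!: exI[of _ "n * m"])
qed

lemma (in comm_group) nat_pow_mult_eq_one:
  assumes "x \<in> carrier G" "y \<in> carrier G" "x [^] (n::nat) = \<one>" "y [^] (m::nat) = \<one>"
  shows "(x \<otimes> y) [^] (n * m) = \<one>"
proof -
  have "(x \<otimes> y) [^] (n * m) = (x [^] n) [^] m \<otimes> (y [^] m) [^] n"
    using assms(1,2) by (simp add: nat_pow_distrib nat_pow_pow mult.commute)
  then show ?thesis using assms by simp
qed

context group
begin

context
  fixes H assumes H: "subgroup H G" and lc: "lower_central G 1 \<subseteq> H"
begin

lemma subset_isolator: "H \<subseteq> isolator G H"
  unfolding isolator_def using subgroup.mem_carrier[OF H] by (auto intro!: exI[of _ 1])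

lemma isolator_iff_FactGroup_pow:
  "g \<in> isolator G H \<longleftrightarrow>
     g \<in> carrier G \<and> (\<exists>n::nat. n > 0 \<and> (H #> g) [^]\<^bsub>G Mod H\<^esub> n = \<one>\<^bsub>G Mod H\<^esub>)"
proof -
  interpret N: normal H G by (rule normal_if_lower_central_subset[OF H lc])
  have "(H #> g) [^]\<^bsub>G Mod H\<^esub> n = \<one>\<^bsub>G Mod H\<^esub> \<longleftrightarrow> g [^] n \<in> H" if "g \<in> carrier G" for n :: nat
    using that N.FactGroup_pow rcos_eq_self_iff[OF H, of "g [^] n"] by simp
  then show ?thesis unfolding isolator_def by auto
qed

lemma isolator_subgroup: "subgroup (isolator G H) G"
proof
  interpret N: normal H G by (rule normal_if_lower_central_subset[OF H lc])
  interpret Q: comm_group "G Mod H" by (rule comm_group_FactGroup_if_lower_central_subset[OF H lc])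
  show "isolator G H \<subseteq> carrier G" by (auto simp: isolator_def)
  show "\<one> \<in> isolator G H" using subset_isolator subgroup.one_closed[OF H] by blast
  fix g h assume "g \<in> isolator G H" "h \<in> isolator G H"
  then obtain n m :: nat where g: "g \<in> carrier G" "n > 0" "(H #> g) [^]\<^bsub>G Mod H\<^esub> n = \<one>\<^bsub>G Mod H\<^esub>"
    and h: "h \<in> carrier G" "m > 0" "(H #> h) [^]\<^bsub>G Mod H\<^esub> m = \<one>\<^bsub>G Mod H\<^esub>"
    unfolding isolator_iff_FactGroup_pow by blast
  have "(H #> (g \<otimes> h)) [^]\<^bsub>G Mod H\<^esub> (n * m) = \<one>\<^bsub>G Mod H\<^esub>"
    using Q.nat_pow_mult_eq_one[OF _ _ g(3) h(3)] g(1) h(1) by (simp add: carrier_FactGroup N.rcos_sum)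
  moreover have "n * m > 0" using g h by simp
  ultimately show "g \<otimes> h \<in> isolator G H" unfolding isolator_iff_FactGroup_pow using g h by blast
next
  fix g assume "g \<in> isolator G H"
  then obtain n :: nat where g: "g \<in> carrier G" "n > 0" "g [^] n \<in> H"
    unfolding isolator_def by blast
  have "inv g [^] n \<in> H" using g H by (simp add: nat_pow_inv subgroup.m_inv_closed)
  then show "inv g \<in> isolator G H" using g unfolding isolator_def by auto
qed

lemma isolator_normal: "isolator G H \<lhd> G"
  using normal_if_lower_central_subset[OF isolator_subgroup] lc subset_isolator by blast

lemma comm_group_Mod_isolator: "comm_group (G Mod isolator G H)"
  using comm_group_FactGroup_if_lower_central_subset[OF isolator_subgroup] lc subset_isolator
  by blast

lemma torsion_free_Mod_isolator: "torsion_free (G Mod isolator G H)"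
  unfolding torsion_free_def
proof (intro ballI allI impI)
  interpret N: normal "isolator G H" G by (rule isolator_normal)
  fix x and n :: nat assume x: "x \<in> carrier (G Mod isolator G H)" and n: "n > 0"
    and e: "x [^]\<^bsub>G Mod isolator G H\<^esub> n = \<one>\<^bsub>G Mod isolator G H\<^esub>"
  obtain g where g: "g \<in> carrier G" and xg: "x = isolator G H #> g"
    using x by (auto simp: carrier_FactGroup)
  have "isolator G H #> (g [^] n) = isolator G H"
    using e N.FactGroup_pow[OF g] by (simp add: xg)
  then have "g [^] n \<in> isolator G H" using rcos_eq_self_iff[OF isolator_subgroup] g by blast
  then have "g \<in> isolator G H" by (rule isolator_root_closed[OF g n])
  then show "x = \<one>\<^bsub>G Mod isolator G H\<^esub>"
    using rcos_eq_self_iff[OF isolator_subgroup] g by (simp add: xg)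
qed

end

end

lemma (in normal) generate_FactGroup_image:
  assumes F: "F \<subseteq> carrier G" and S: "S \<subseteq> H" and gen: "generate G (F \<union> S) = carrier G"
  shows "generate (G Mod H) ((\<lambda>a. H #> a) ` F) = carrier (G Mod H)"
proof -
  interpret Q: group "G Mod H" by (rule factorgroup_is_group)
  interpret ph: group_hom G "G Mod H" "\<lambda>a. H #> a" by (rule group_hom_r_coset)
  let ?p = "\<lambda>a. H #> a"
  have SC: "S \<subseteq> carrier G" using S subset by blast
  have pS: "?p ` S \<subseteq> {\<one>\<^bsub>G Mod H\<^esub>}"
    using S SC coset_join2[OF _ subgroup_axioms] by auto
  have "carrier (G Mod H) = ?p ` generate G (F \<union> S)" using gen by (simp add: carrier_FactGroup)
  also have "\<dots> = generate (G Mod H) (?p ` F \<union> ?p ` S)"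
    using ph.generate_img[of "F \<union> S"] F SC by (simp add: image_Un)
  also have "\<dots> = generate (G Mod H) (?p ` F)"
  proof
    show "generate (G Mod H) (?p ` F) \<subseteq> generate (G Mod H) (?p ` F \<union> ?p ` S)"
      by (intro Q.mono_generate) auto
    have "?p ` F \<union> ?p ` S \<subseteq> generate (G Mod H) (?p ` F)"
      using pS generate.one[of "G Mod H"] by (auto intro: generate.incl)
    then show "generate (G Mod H) (?p ` F \<union> ?p ` S) \<subseteq> generate (G Mod H) (?p ` F)"
      using F by (intro Q.generate_subgroup_incl Q.generate_is_subgroup) (auto simp: carrier_FactGroup)
  qed
  finally show ?thesis by simp
qed

section \<open>Finitely generated torsion-free abelian groups\<close>

definition finite_generating_set :: "('g, 'm) monoid_scheme \<Rightarrow> 'g set \<Rightarrow> bool" where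
  "finite_generating_set G S \<longleftrightarrow> finite S \<and> S \<subseteq> carrier G \<and> generate G S = carrier G"

definition nontrivial_relation :: "('g, 'm) monoid_scheme \<Rightarrow> 'g set \<Rightarrow> ('g \<Rightarrow> int) \<Rightarrow> bool" where
  "nontrivial_relation G S n \<longleftrightarrow> (\<exists>a\<in>S. n a \<noteq> 0) \<and> finprod G (\<lambda>a. a [^]\<^bsub>G\<^esub> n a) S = \<one>\<^bsub>G\<^esub>"

context group
begin

lemma generate_eq_carrierI:
  assumes "S' \<subseteq> carrier G" "S \<subseteq> generate G S'" "generate G S = carrier G"
  shows "generate G S' = carrier G"
  using generate_subgroup_incl[OF assms(2) generate_is_subgroup[OF assms(1)]]
    generate_incl[OF assms(1)] assms(3) by blast

lemma torsion_free_int_pow_eq_one: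
  assumes tf: "torsion_free G" and a: "a \<in> carrier G" and k: "k \<noteq> 0" and e: "a [^] (k::int) = \<one>"
  shows "a = \<one>"
proof -
  obtain m :: nat where m: "k = int m \<or> k = - int m" by (metis int_cases2)
  then have "a [^] m = \<one>"
    using e a int_pow_neg_int[OF a, of m] by (auto simp: int_pow_int)
  moreover have "m > 0" using m k by auto
  ultimately show ?thesis using tf a by (auto simp: torsion_free_def)
qed

end

lemma sum_nat_abs_transvection_less:
  fixes n :: "'a \<Rightarrow> int"
  assumes T: "finite T" "a \<notin> T" "b \<notin> T" "b' \<notin> insert a T" and ab: "a \<noteq> b" "n b \<noteq> 0"
    and dec: "\<bar>n a - s * n b\<bar> = \<bar>n a\<bar> - \<bar>n b\<bar>"
  shows "(\<Sum>x\<in>insert b' (insert a T). nat \<bar>((n(a := n a - s * n b))(b' := n b)) x\<bar>)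
    < (\<Sum>x\<in>insert b (insert a T). nat \<bar>n x\<bar>)"
proof -
  have "(\<Sum>x\<in>T. nat \<bar>((n(a := n a - s * n b))(b' := n b)) x\<bar>) = (\<Sum>x\<in>T. nat \<bar>n x\<bar>)"
    using T by (intro sum.cong) auto
  moreover have "b' \<noteq> a" using T by blast
  ultimately show ?thesis using T ab dec by simp
qed

context comm_group
begin

lemma finprod_int_pow_transvection:
  assumes T: "finite T" "T \<subseteq> carrier G" and a: "a \<in> carrier G" "a \<notin> T"
    and b: "b \<in> carrier G" "b \<notin> T" "b \<noteq> a" and b': "b \<otimes> a [^] s \<notin> insert a T"
  shows "finprod G (\<lambda>x. x [^] ((n(a := n a - s * n b))(b \<otimes> a [^] s := n b)) x) (insert (b \<otimes> a [^] s) (insert a T))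
       = finprod G (\<lambda>x. x [^] (n x :: int)) (insert b (insert a T))"
proof -
  define b' where "b' = b \<otimes> a [^] s"
  define P where "P = finprod G (\<lambda>x. x [^] n x) T"
  have P: "P \<in> carrier G" using T by (auto simp: P_def intro: finprod_closed)
  have b'C: "b' \<in> carrier G" using a b by (simp add: b'_def)
  have "finprod G (\<lambda>x. x [^] ((n(a := n a - s * n b))(b' := n b)) x) T = P"
    using a b' T by (auto simp: P_def b'_def intro!: finprod_cong')
  then have "finprod G (\<lambda>x. x [^] ((n(a := n a - s * n b))(b' := n b)) x) (insert b' (insert a T))
      = b' [^] n b \<otimes> (a [^] (n a - s * n b) \<otimes> P)"
    using T a b'C b' by (subst finprod_insert; auto simp: b'_def)+
  also have "\<dots> = b [^] n b \<otimes> a [^] (s * n b) \<otimes> (a [^] n a \<otimes> inv (a [^] (s * n b)) \<otimes> P)"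
    using a b by (simp add: b'_def int_pow_distrib int_pow_pow int_pow_diff)
  also have "\<dots> = b [^] n b \<otimes> (a [^] n a \<otimes> P)"
    using a b P by (simp add: m_ac)
  also have "\<dots> = finprod G (\<lambda>x. x [^] n x) (insert b (insert a T))"
    using T a b unfolding P_def by (subst finprod_insert; auto)+
  finally show ?thesis by (simp add: b'_def)
qed

lemma finite_generating_set_transvection:
  assumes S: "finite_generating_set G S" and ab: "a \<in> S" "b \<in> S" "a \<noteq> b"
  shows "finite_generating_set G (insert (b \<otimes> a [^] (s::int)) (S - {b}))"
proof -
  let ?S' = "insert (b \<otimes> a [^] s) (S - {b})"
  have S': "?S' \<subseteq> carrier G" using S ab by (auto simp: finite_generating_set_def)
  have "subgroup (generate G ?S') G" using S' by (rule generate_is_subgroup)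
  moreover have "b \<otimes> a [^] s \<in> generate G ?S'" "a \<in> generate G ?S'"
    using ab by (auto intro: generate.incl)
  ultimately have "b \<otimes> a [^] s \<otimes> a [^] (- s) \<in> generate G ?S'"
    by (meson subgroup.m_closed subgroup_int_pow_closed)
  moreover have "a \<in> carrier G" "b \<in> carrier G" using ab S by (auto simp: finite_generating_set_def)
  ultimately have "b \<in> generate G ?S'" by (simp add: m_assoc int_pow_neg)
  then have "S \<subseteq> generate G ?S'" using generate.incl[of _ ?S' G] by auto
  then have "generate G ?S' = carrier G"
    using S S' generate_eq_carrierI[of ?S' S] by (auto simp: finite_generating_set_def)
  then show ?thesis using S S' by (simp add: finite_generating_set_def)
qed

lemma finite_generating_set_remove:
  assumes S: "finite_generating_set G S" and b: "b \<in> generate G (S - {b})"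
  shows "finite_generating_set G (S - {b})"
proof -
  have "S \<subseteq> generate G (S - {b})" using b generate.incl[of _ "S - {b}" G] by blast
  then show ?thesis using S generate_eq_carrierI[of "S - {b}" S] by (auto simp: finite_generating_set_def)
qed

text \<open>One step of the Euclidean algorithm on the coefficients of a relation: replacing the generator
  \<open>b\<close> by \<open>b a\<^sup>\<plusminus>\<^sup>1\<close> lowers \<open>|n a|\<close> by \<open>|n b|\<close>.\<close>

lemma relation_transvection:
  assumes tf: "torsion_free G" and S: "finite_generating_set G S" and one: "\<one> \<notin> S"
    and rel: "finprod G (\<lambda>x. x [^] (n x :: int)) S = \<one>"
    and ab: "a \<in> S" "b \<in> S" "a \<noteq> b" "n a \<noteq> 0" "n b \<noteq> 0" "\<bar>n b\<bar> \<le> \<bar>n a\<bar>"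
  obtains S' where "finite_generating_set G S'" "card S' < card S"
  | S' n' where "finite_generating_set G S'" "card S' = card S" "nontrivial_relation G S' n'"
      "(\<Sum>x\<in>S'. nat \<bar>n' x\<bar>) < (\<Sum>x\<in>S. nat \<bar>n x\<bar>)"
proof -
  have fin: "finite S" and sub: "S \<subseteq> carrier G" using S by (auto simp: finite_generating_set_def)
  define s :: int where "s = (if (n a > 0) = (n b > 0) then 1 else -1)"
  have abs_dec: "\<bar>n a - s * n b\<bar> = \<bar>n a\<bar> - \<bar>n b\<bar>" using ab unfolding s_def by auto
  define b' where "b' = b \<otimes> a [^] s"
  define S' where "S' = insert b' (S - {b})"
  have S': "finite_generating_set G S'"
    unfolding S'_def b'_def using S ab by (intro finite_generating_set_transvection)
  show ?thesis
  proof (cases "b' \<in> S - {b}")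
    case True
    then show ?thesis using S' card_Diff1_less[OF fin ab(2)] that(1) by (simp add: S'_def insert_absorb)
  next
    case False
    define n' where "n' = (n(a := n a - s * n b))(b' := n b)"
    define T where "T = S - {a, b}"
    have T: "finite T" "T \<subseteq> carrier G" "a \<notin> T" "b \<notin> T" using fin sub by (auto simp: T_def)
    have S_eq: "S = insert b (insert a T)" and S'_eq: "S' = insert b' (insert a T)"
      using ab by (auto simp: T_def S'_def)
    have b'_notin: "b' \<notin> insert a T" using False ab by (auto simp: T_def)
    have "b' \<noteq> b"
    proof
      assume "b' = b"
      then have "a [^] s = \<one>" using ab sub unfolding b'_def by (metis int_pow_closed l_cancel_one' subsetD)
      then show False using torsion_free_int_pow_eq_one[OF tf, of a s] ab sub one by (auto simp: s_def)
    qed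
    then have "card S' = card S" using T ab b'_notin by (simp add: S_eq S'_eq)
    moreover have "finprod G (\<lambda>x. x [^] n' x) S' = \<one>"
      using finprod_int_pow_transvection[OF T(1,2) _ T(3) _ T(4), where s = s and n = n] b'_notin ab sub rel
      by (simp add: S_eq S'_eq n'_def b'_def)
    then have "nontrivial_relation G S' n'"
      using ab by (auto simp: nontrivial_relation_def S'_def n'_def intro!: bexI[of _ b'])
    moreover have "(\<Sum>x\<in>S'. nat \<bar>n' x\<bar>) < (\<Sum>x\<in>S. nat \<bar>n x\<bar>)"
      unfolding S_eq S'_eq n'_def using T(1,3,4) b'_notin ab(3,5) abs_dec
      by (rule sum_nat_abs_transvection_less)
    ultimately show ?thesis using that(2) S' by blast
  qed
qed

lemma generating_set_shrinks_if_relation: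
  assumes tf: "torsion_free G"
  shows "finite_generating_set G S \<Longrightarrow> nontrivial_relation G S n
    \<Longrightarrow> \<exists>S'. finite_generating_set G S' \<and> card S' < card S"
proof (induction "\<Sum>a\<in>S. nat \<bar>n a\<bar>" arbitrary: S n rule: less_induct)
  case less
  have fin: "finite S" and sub: "S \<subseteq> carrier G" using less.prems(1) by (auto simp: finite_generating_set_def)
  obtain a0 where a0: "a0 \<in> S" "n a0 \<noteq> 0" and rel: "finprod G (\<lambda>a. a [^] n a) S = \<one>"
    using less.prems(2) by (auto simp: nontrivial_relation_def)
  show ?case
  proof (cases "\<one> \<in> S")
    case True
    then show ?thesis
      using finite_generating_set_remove[OF less.prems(1) generate.one] card_Diff1_less[OF fin True]
      by blast
  next
    case one: False
    have "\<exists>b0\<in>S. b0 \<noteq> a0 \<and> n b0 \<noteq> 0"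
    proof (rule ccontr)
      assume "\<not> ?thesis"
      then have "finprod G (\<lambda>a. a [^] n a) (S - {a0}) = \<one>"
        by (intro finprod_one_eqI) auto
      moreover have "finprod G (\<lambda>a. a [^] n a) S = a0 [^] n a0 \<otimes> finprod G (\<lambda>a. a [^] n a) (S - {a0})"
        using finprod_insert[of "S - {a0}" a0 "\<lambda>a. a [^] n a"] fin sub a0 by (auto simp: insert_absorb)
      ultimately have "a0 [^] n a0 = \<one>" using rel a0 sub by auto
      then show False using torsion_free_int_pow_eq_one[OF tf _ a0(2)] a0 sub one by auto
    qed
    then obtain b0 where b0: "b0 \<in> S" "b0 \<noteq> a0" "n b0 \<noteq> 0" by blast
    define a where "a = (if \<bar>n a0\<bar> \<ge> \<bar>n b0\<bar> then a0 else b0)"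
    define b where "b = (if \<bar>n a0\<bar> \<ge> \<bar>n b0\<bar> then b0 else a0)"
    have ab: "a \<in> S" "b \<in> S" "a \<noteq> b" "n a \<noteq> 0" "n b \<noteq> 0" "\<bar>n b\<bar> \<le> \<bar>n a\<bar>"
      using a0 b0 by (auto simp: a_def b_def)
    show ?thesis
      by (rule relation_transvection[OF tf less.prems(1) one rel ab])
        (use less.hyps in \<open>auto dest!: less.hyps\<close>)
  qed
qed

lemma finprod_int_pow_indicator:
  assumes "finite S" "S \<subseteq> carrier G" "a \<in> S"
  shows "finprod G (\<lambda>b. b [^] (if b = a then 1 else 0 :: int)) S = a"
proof -
  have "finprod G (\<lambda>b. b [^] (if b = a then 1 else 0 :: int)) (insert a (S - {a}))
      = a [^] (1::int) \<otimes> finprod G (\<lambda>b. b [^] (if b = a then 1 else 0 :: int)) (S - {a})"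
    using assms by (subst finprod_insert) auto
  also have "finprod G (\<lambda>b. b [^] (if b = a then 1 else 0 :: int)) (S - {a}) = \<one>"
    by (intro finprod_one_eqI) auto
  finally show ?thesis using assms by (simp add: insert_absorb subsetD)
qed

lemma finprod_lookup_hom:
  assumes "S \<subseteq> carrier G"
  shows "(\<lambda>x. finprod G (\<lambda>a. a [^] poly_mapping.lookup x a) S) \<in> hom (free_Abelian_group S) G"
proof (rule homI)
  fix x y :: "'a \<Rightarrow>\<^sub>0 int"
  have "finprod G (\<lambda>a. a [^] poly_mapping.lookup (x + y) a) S
      = finprod G (\<lambda>a. a [^] poly_mapping.lookup x a \<otimes> a [^] poly_mapping.lookup y a) S"
    using assms by (intro finprod_cong') (auto simp: Poly_Mapping.lookup_add int_pow_mult subsetD)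
  also have "\<dots> = finprod G (\<lambda>a. a [^] poly_mapping.lookup x a) S \<otimes> finprod G (\<lambda>a. a [^] poly_mapping.lookup y a) S"
    using assms by (intro finprod_multf) auto
  finally show "finprod G (\<lambda>a. a [^] poly_mapping.lookup (x \<otimes>\<^bsub>free_Abelian_group S\<^esub> y) a) S
      = finprod G (\<lambda>a. a [^] poly_mapping.lookup x a) S \<otimes> finprod G (\<lambda>a. a [^] poly_mapping.lookup y a) S"
    by simp
qed (use assms in \<open>auto intro: finprod_closed\<close>)

lemma iso_free_Abelian_group_if_no_relation:
  assumes S: "finite_generating_set G S" and norel: "\<And>n. \<not> nontrivial_relation G S n"
  shows "G \<cong> free_Abelian_group S"
proof -
  have fin: "finite S" and sub: "S \<subseteq> carrier G" and gen: "generate G S = carrier G"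
    using S by (auto simp: finite_generating_set_def)
  define h where "h x = finprod G (\<lambda>a. a [^] poly_mapping.lookup x a) S" for x :: "'a \<Rightarrow>\<^sub>0 int"
  have hom: "h \<in> hom (free_Abelian_group S) G" unfolding h_def using sub by (rule finprod_lookup_hom)
  then interpret h: group_hom "free_Abelian_group S" G h
    by (simp add: group_hom_axioms_def group_hom_def is_group)
  have "kernel (free_Abelian_group S) G h \<subseteq> {\<one>\<^bsub>free_Abelian_group S\<^esub>}"
  proof
    fix x assume "x \<in> kernel (free_Abelian_group S) G h"
    then have "Poly_Mapping.keys x \<subseteq> S" "h x = \<one>" by (auto simp: kernel_def)
    moreover have "\<forall>a\<in>S. poly_mapping.lookup x a = 0"
      using norel[of "poly_mapping.lookup x"] \<open>h x = \<one>\<close> by (auto simp: h_def nontrivial_relation_def)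
    ultimately have "Poly_Mapping.keys x = {}" by (metis in_keys_iff subset_empty subset_iff)
    then show "x \<in> {\<one>\<^bsub>free_Abelian_group S\<^esub>}" by simp
  qed
  then have ker: "kernel (free_Abelian_group S) G h = {\<one>\<^bsub>free_Abelian_group S\<^esub>}"
    using h.hom_one by (auto simp: kernel_def)
  have "S \<subseteq> h ` carrier (free_Abelian_group S)"
  proof
    fix a assume a: "a \<in> S"
    have "h (frag_of a) = a"
      unfolding h_def lookup_frag_of by (rule finprod_int_pow_indicator[OF fin sub a])
    then show "a \<in> h ` carrier (free_Abelian_group S)" using a by (intro image_eqI[of _ _ "frag_of a"]) auto
  qed
  then have "generate G S \<subseteq> h ` carrier (free_Abelian_group S)"
    by (intro generate_subgroup_incl h.img_is_subgroup)
  then have "h ` carrier (free_Abelian_group S) = carrier G" using gen hom by (auto simp: hom_def)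
  then have "h \<in> iso (free_Abelian_group S) G"
    using iso_kernel_image[OF group_free_Abelian_group is_group, of h S] hom ker by blast
  then show ?thesis by (rule group.iso_sym[OF group_free_Abelian_group is_isoI])
qed

lemma torsion_free_finitely_generated_iso_free_Abelian_group:
  assumes tf: "torsion_free G"
  shows "finite_generating_set G S \<Longrightarrow> \<exists>d::nat. G \<cong> free_Abelian_group {..<d}"
proof (induction "card S" arbitrary: S rule: less_induct)
  case less
  show ?case
  proof (cases "\<exists>n. nontrivial_relation G S n")
    case True
    then show ?thesis using generating_set_shrinks_if_relation[OF tf less.prems] less.hyps by blast
  next
    case False
    then have "G \<cong> free_Abelian_group S" using less.prems iso_free_Abelian_group_if_no_relation by blast
    moreover have "S \<approx> {..<card S}"
      using less.prems by (simp add: eqpoll_iff_card finite_generating_set_def)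
    then have "free_Abelian_group S \<cong> free_Abelian_group {..<card S}"
      by (simp add: isomorphic_free_Abelian_groups)
    ultimately show ?thesis using iso_trans by blast
  qed
qed

end

section \<open>Positive eigenfunctions on a connected locally finite graph\<close>

lemma countable_bounded_convergent_subseq:
  fixes k :: "nat \<Rightarrow> 'x \<Rightarrow> real"
  assumes cnt: "countable (UNIV :: 'x set)" and bd: "\<And>n p. \<bar>k n p\<bar> \<le> B p"
  obtains s kinf where "strict_mono s" "\<And>p. (\<lambda>n. k (s n) p) \<longlonglongrightarrow> kinf p"
proof -
  define e where "e = from_nat_into (UNIV :: 'x set)"
  have e_surj: "\<exists>n. e n = p" for p using from_nat_into_surj[OF cnt, of p] by (simp add: e_def)
  define P where "P n s \<longleftrightarrow> convergent (\<lambda>m. k (s m) (e n))" for n and s :: "nat \<Rightarrow> nat"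
  interpret subseqs P
  proof
    fix n and s :: "nat \<Rightarrow> nat" assume "strict_mono s"
    have "bounded (range (\<lambda>m. k (s m) (e n)))"
      using bd by (intro boundedI[of _ "B (e n)"]) auto
    then obtain l r where "strict_mono r" "((\<lambda>m. k (s m) (e n)) \<circ> r) \<longlonglongrightarrow> l"
      using bounded_imp_convergent_subsequence by blast
    then show "\<exists>r'. strict_mono r' \<and> P n (s \<circ> r')"
      by (intro exI[of _ r]) (auto simp: P_def convergent_def o_def)
  qed
  have stab: "P n (s \<circ> r)" if "strict_mono r" "P n s" for r s n
  proof -
    have "convergent ((\<lambda>m. k (s m) (e n)) \<circ> r)"
      using that by (intro convergent_subseq_convergent) (auto simp: P_def)
    then show ?thesis by (simp add: P_def o_def)
  qed
  have conv: "convergent (\<lambda>m. k (diagseq m) (e n))" for n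
  proof -
    have "P n (diagseq \<circ> ((+) (Suc n)))" by (rule diagseq_holds[OF stab])
    then obtain l where "(\<lambda>m. k (diagseq (m + Suc n)) (e n)) \<longlonglongrightarrow> l"
      by (auto simp: P_def convergent_def o_def add.commute)
    then have "(\<lambda>m. k (diagseq m) (e n)) \<longlonglongrightarrow> l" by (rule LIMSEQ_offset)
    then show ?thesis by (auto simp: convergent_def)
  qed
  have "(\<lambda>n. k (diagseq n) p) \<longlonglongrightarrow> lim (\<lambda>n. k (diagseq n) p)" for p
    using conv e_surj[of p] by (auto simp: convergent_LIMSEQ_iff)
  with subseq_diagseq show ?thesis by (rule that)
qed

locale connected_locally_finite_graph =
  fixes b :: "'x \<Rightarrow> 'x \<Rightarrow> real" and c :: "'x \<Rightarrow> real"
  assumes countable_vertices: "countable (UNIV :: 'x set)"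
    and weights_nonneg: "\<And>x y. 0 \<le> b x y"
    and locally_finite: "locally_finite b"
    and connected: "graph_connected b"
begin

definition neighbours :: "'x \<Rightarrow> 'x set" where
  "neighbours x = {y. b x y > 0}"

definition eigen_eq :: "real \<Rightarrow> ('x \<Rightarrow> real) \<Rightarrow> bool" where
  "eigen_eq lam u \<longleftrightarrow>
     (\<forall>x. (\<Sum>y\<in>neighbours x. b x y * u y) = (sum (b x) (neighbours x) + c x - lam) * u x)"

definition pos_eigen :: "real \<Rightarrow> ('x \<Rightarrow> real) set" where
  "pos_eigen lam = {u. (\<forall>x. 0 \<le> u x) \<and> u \<noteq> (\<lambda>_. 0) \<and> eigen_eq lam u}"

lemma finite_neighbours: "finite (neighbours x)"
  using locally_finite by (simp add: locally_finite_def neighbours_def)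

lemma weight_eq_zero_if_not_neighbour: "y \<notin> neighbours x \<Longrightarrow> b x y = 0"
  using weights_nonneg[of x y] by (simp add: neighbours_def)

lemma has_sum_neighbours: "((\<lambda>y. b x y * f y) has_sum (\<Sum>y\<in>neighbours x. b x y * f y)) UNIV"
proof -
  have "((\<lambda>y. b x y * f y) has_sum (\<Sum>y\<in>neighbours x. b x y * f y)) (neighbours x)"
    by (rule has_sum_finite[OF finite_neighbours])
  then show ?thesis
    by (rule has_sum_cong_neutral[THEN iffD1, rotated -1]) (auto simp: weight_eq_zero_if_not_neighbour)
qed

lemma dom_H_eq_UNIV: "dom_H b = UNIV"
proof -
  have "(\<lambda>y. b x y * \<bar>f y\<bar>) summable_on UNIV" for x f
    using has_sum_neighbours[of x "\<lambda>y. \<bar>f y\<bar>"] by (auto simp: summable_on_def)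
  then show ?thesis by (auto simp: dom_H_def)
qed

lemma H_op_eq:
  "H_op b c f x = sum (b x) (neighbours x) * f x - (\<Sum>y\<in>neighbours x. b x y * f y) + c x * f x"
  using infsumI[OF has_sum_neighbours, of x "\<lambda>y. f x - f y"]
  by (simp add: H_op_def right_diff_distrib sum_subtractf sum_distrib_right)

lemma eigen_eq_iff_H_op: "eigen_eq lam u \<longleftrightarrow> (\<forall>x. H_op b c u x - lam * u x = 0)"
  unfolding eigen_eq_def H_op_eq by (auto simp: algebra_simps)

lemma pos_eigenfunctions_eq: "pos_eigenfunctions b c = (\<Union>lam. pos_eigen lam)"
  unfolding pos_eigenfunctions_def pos_eigen_def dom_H_eq_UNIV eigen_eq_iff_H_op by auto

lemma eigen_eq_lincomb:
  assumes u: "eigen_eq lam u" and v: "eigen_eq lam v"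
  shows "eigen_eq lam (\<lambda>x. a * u x + d * v x)"
  unfolding eigen_eq_def
proof
  fix x
  have "(\<Sum>y\<in>neighbours x. b x y * (a * u y + d * v y))
      = a * (\<Sum>y\<in>neighbours x. b x y * u y) + d * (\<Sum>y\<in>neighbours x. b x y * v y)"
    by (simp add: sum.distrib sum_distrib_left algebra_simps)
  also have "\<dots> = (sum (b x) (neighbours x) + c x - lam) * (a * u x + d * v x)"
    using u v unfolding eigen_eq_def by (simp only:) (simp add: algebra_simps)
  finally show "(\<Sum>y\<in>neighbours x. b x y * (a * u y + d * v y))
      = (sum (b x) (neighbours x) + c x - lam) * (a * u x + d * v x)" .
qed

lemma eigen_eq_limit:
  assumes "\<And>n. eigen_eq lam (k n)" and "\<And>x. (\<lambda>n. k n x) \<longlonglongrightarrow> u x"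
  shows "eigen_eq lam u"
  unfolding eigen_eq_def
proof
  fix x
  have "(\<lambda>n. \<Sum>y\<in>neighbours x. b x y * k n y) \<longlonglongrightarrow> (\<Sum>y\<in>neighbours x. b x y * u y)"
    by (intro tendsto_intros assms(2))
  moreover have "(\<lambda>n. \<Sum>y\<in>neighbours x. b x y * k n y)
      = (\<lambda>n. (sum (b x) (neighbours x) + c x - lam) * k n x)"
    using assms(1) by (auto simp: eigen_eq_def)
  moreover have "(\<lambda>n. (sum (b x) (neighbours x) + c x - lam) * k n x)
      \<longlonglongrightarrow> (sum (b x) (neighbours x) + c x - lam) * u x"
    by (intro tendsto_intros assms(2))
  ultimately show "(\<Sum>y\<in>neighbours x. b x y * u y) = (sum (b x) (neighbours x) + c x - lam) * u x"
    using LIMSEQ_unique by metis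
qed

lemma harnack_inequality:
  "\<exists>C\<ge>0. \<forall>u. eigen_eq lam u \<longrightarrow> (\<forall>x. 0 \<le> u x) \<longrightarrow> u q \<le> C * u p"
proof -
  have "(\<lambda>u v. 0 < b u v)\<^sup>*\<^sup>* p q" using connected by (simp add: graph_connected_def)
  then show ?thesis
  proof (induction rule: rtranclp_induct)
    case base
    then show ?case by (intro exI[of _ 1]) auto
  next
    case (step q r)
    then obtain C where C: "C \<ge> 0" "\<forall>u. eigen_eq lam u \<longrightarrow> (\<forall>x. 0 \<le> u x) \<longrightarrow> u q \<le> C * u p"
      by blast
    define K where "K = max 0 ((sum (b q) (neighbours q) + c q - lam) / b q r)"
    have "u r \<le> K * C * u p" if u: "eigen_eq lam u" "\<forall>x. 0 \<le> u x" for u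
    proof -
      have "b q r * u r \<le> (\<Sum>y\<in>neighbours q. b q y * u y)"
        using step(2) finite_neighbours u(2) weights_nonneg
        by (intro member_le_sum) (auto simp: neighbours_def)
      also have "\<dots> = (sum (b q) (neighbours q) + c q - lam) * u q" using u(1) by (simp add: eigen_eq_def)
      finally have "u r \<le> (sum (b q) (neighbours q) + c q - lam) / b q r * u q"
        using step(2) by (simp add: field_simps)
      also have "\<dots> \<le> K * u q" unfolding K_def using u(2) by (intro mult_right_mono) auto
      also have "\<dots> \<le> K * (C * u p)" using C u by (intro mult_left_mono) (auto simp: K_def)
      finally show ?thesis by (simp add: mult.assoc)
    qed
    moreover have "K * C \<ge> 0" using C by (simp add: K_def)
    ultimately show ?case by blast
  qed
qed

lemma eigen_eq_nonneg_vanishes: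
  assumes "eigen_eq lam u" "\<forall>x. 0 \<le> u x" "u p = 0"
  shows "u q = 0"
proof -
  obtain C where "u q \<le> C * u p" using harnack_inequality[of lam q p] assms by blast
  then show ?thesis using assms by (metis mult_zero_right order_antisym_conv)
qed

lemma pos_eigen_pos:
  assumes u: "u \<in> pos_eigen lam" shows "u x > 0"
proof (rule ccontr)
  assume "\<not> u x > 0"
  then have "u x = 0" using u by (auto simp: pos_eigen_def less_eq_real_def)
  then have "u q = 0" for q using u eigen_eq_nonneg_vanishes[of lam u x q] by (auto simp: pos_eigen_def)
  then show False using u by (auto simp: pos_eigen_def fun_eq_iff)
qed

lemma pos_eigen_scale: "a > 0 \<Longrightarrow> u \<in> pos_eigen lam \<Longrightarrow> (\<lambda>x. a * u x) \<in> pos_eigen lam"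
  using eigen_eq_lincomb[of lam u u a 0] by (auto simp: pos_eigen_def fun_eq_iff)

lemma pos_eigen_normalised_convergent_subseq:
  fixes k :: "nat \<Rightarrow> 'x \<Rightarrow> real"
  assumes k: "\<And>n. k n \<in> pos_eigen lam" and kv: "\<And>n. k n v = 1"
  obtains s kinf where "strict_mono s" "\<And>p. (\<lambda>n. k (s n) p) \<longlonglongrightarrow> kinf p"
    "kinf \<in> pos_eigen lam" "kinf v = 1"
proof -
  obtain B where B: "\<And>p. \<forall>u. eigen_eq lam u \<longrightarrow> (\<forall>x. 0 \<le> u x) \<longrightarrow> u p \<le> B p * u v"
    using harnack_inequality[of lam _ v] by metis
  have bound: "\<bar>k n p\<bar> \<le> B p" for n p
    using B[of p] k[of n] kv[of n] by (auto simp: pos_eigen_def)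
  obtain s kinf where s: "strict_mono s" and lim: "\<And>p. (\<lambda>n. k (s n) p) \<longlonglongrightarrow> kinf p"
    using countable_bounded_convergent_subseq[of k B, OF countable_vertices bound] by auto
  have "eigen_eq lam kinf" using k by (intro eigen_eq_limit[OF _ lim]) (auto simp: pos_eigen_def)
  moreover have "0 \<le> kinf p" for p
    using k by (intro LIMSEQ_le_const[OF lim]) (auto simp: pos_eigen_def)
  moreover have "kinf v = 1" using lim[of v] kv by (simp add: LIMSEQ_const_iff)
  ultimately have "kinf \<in> pos_eigen lam" by (auto simp: pos_eigen_def fun_eq_iff intro!: exI[of _ v])
  then show ?thesis using that[OF s lim] \<open>kinf v = 1\<close> by blast
qed

end

section \<open>Invariant group actions\<close>

locale invariant_graph_action = connected_locally_finite_graph b c + group_action G UNIV \<phi>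
  for b :: "'x \<Rightarrow> 'x \<Rightarrow> real" and c and G :: "('g, 'm) monoid_scheme" (structure) and \<phi> +
  assumes cocompact: "cocompact G \<phi>" and invariant: "G_invariant G \<phi> b c"
begin

sublocale group G
  using group_hom by (simp add: group_hom_def)

abbreviation T :: "'g \<Rightarrow> ('x \<Rightarrow> real) \<Rightarrow> 'x \<Rightarrow> real" where
  "T \<equiv> transl G \<phi>"

lemma action_one [simp]: "\<phi> \<one> x = x"
  using id_eq_one by (metis UNIV_I restrict_apply')

lemma action_mult: "g \<in> carrier G \<Longrightarrow> h \<in> carrier G \<Longrightarrow> \<phi> (g \<otimes> h) x = \<phi> g (\<phi> h x)"
  using composition_rule by simp

lemma action_inv_cancel [simp]: "g \<in> carrier G \<Longrightarrow> \<phi> (inv g) (\<phi> g x) = x"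
  using action_mult[of "inv g" g x] by simp

lemma action_cancel_inv [simp]: "g \<in> carrier G \<Longrightarrow> \<phi> g (\<phi> (inv g) x) = x"
  using action_mult[of g "inv g" x] by simp

lemma T_apply: "T g f x = f (\<phi> (inv g) x)"
  by (simp add: transl_def)

lemma T_inv_apply: "g \<in> carrier G \<Longrightarrow> T (inv g) f x = f (\<phi> g x)"
  by (simp add: transl_def)

lemma T_mult: "g \<in> carrier G \<Longrightarrow> h \<in> carrier G \<Longrightarrow> T (g \<otimes> h) f = T g (T h f)"
  by (simp add: transl_def inv_mult_group action_mult fun_eq_iff)

lemma T_one [simp]: "T \<one> f = f"
  by (simp add: transl_def fun_eq_iff)

lemma T_scale: "T g (\<lambda>x. a * f x) = (\<lambda>x. a * T g f x)"
  by (simp add: transl_def fun_eq_iff)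

lemma H_op_T: "g \<in> carrier G \<Longrightarrow> H_op b c (T g f) = T g (H_op b c f)"
  using invariant dom_H_eq_UNIV by (auto simp: G_invariant_def)

lemma eigen_eq_T: "g \<in> carrier G \<Longrightarrow> eigen_eq lam u \<Longrightarrow> eigen_eq lam (T g u)"
  by (simp add: eigen_eq_iff_H_op H_op_T) (simp add: transl_def)

lemma T_pos_eigen:
  assumes "g \<in> carrier G" "u \<in> pos_eigen lam" shows "T g u \<in> pos_eigen lam"
proof -
  have pos: "T g u x > 0" for x using pos_eigen_pos[OF assms(2)] by (simp add: T_apply)
  then have "T g u \<noteq> (\<lambda>_. 0)" by (metis less_irrefl)
  then show ?thesis using assms eigen_eq_T pos by (auto simp: pos_eigen_def less_imp_le)
qed

definition pos_eigen_kernel :: "real \<Rightarrow> 'g set" where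
  "pos_eigen_kernel lam = {g \<in> carrier G. \<forall>h\<in>pos_eigen lam. T g h = h}"

lemma pos_eigen_kernel_subgroup: "subgroup (pos_eigen_kernel lam) G"
proof
  show "pos_eigen_kernel lam \<subseteq> carrier G" "\<one> \<in> pos_eigen_kernel lam"
    by (auto simp: pos_eigen_kernel_def)
  fix g g' assume "g \<in> pos_eigen_kernel lam" "g' \<in> pos_eigen_kernel lam"
  then show "g \<otimes> g' \<in> pos_eigen_kernel lam" by (auto simp: pos_eigen_kernel_def T_mult)
next
  fix g assume g: "g \<in> pos_eigen_kernel lam"
  have "T (inv g) h = h" if "h \<in> pos_eigen lam" for h
    using g that T_mult[of "inv g" g h] by (auto simp: pos_eigen_kernel_def)
  then show "inv g \<in> pos_eigen_kernel lam" using g by (auto simp: pos_eigen_kernel_def)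
qed

lemma pos_eigen_kernel_normal: "pos_eigen_kernel lam \<lhd> G"
  unfolding normal_inv_iff
proof (intro conjI pos_eigen_kernel_subgroup ballI)
  fix x k assume x: "x \<in> carrier G" and k: "k \<in> pos_eigen_kernel lam"
  have "T (x \<otimes> k \<otimes> inv x) h = h" if h: "h \<in> pos_eigen lam" for h
  proof -
    have "T (x \<otimes> k \<otimes> inv x) h = T x (T k (T (inv x) h))"
      using x k by (simp add: pos_eigen_kernel_def T_mult)
    also have "T k (T (inv x) h) = T (inv x) h"
      using k T_pos_eigen[OF _ h, of "inv x"] x by (simp add: pos_eigen_kernel_def)
    finally show ?thesis using x T_mult[of x "inv x" h] by simp
  qed
  then show "x \<otimes> k \<otimes> inv x \<in> pos_eigen_kernel lam" using x k by (auto simp: pos_eigen_kernel_def)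
qed

lemma T_eq_if_rcos_eq:
  assumes "a \<in> carrier G" "a' \<in> carrier G" "pos_eigen_kernel lam #> a = pos_eigen_kernel lam #> a'"
    and h: "h \<in> pos_eigen lam"
  shows "T a h = T a' h"
proof -
  have k: "a \<otimes> inv a' \<in> pos_eigen_kernel lam"
    using assms rcos_eq_iff[OF pos_eigen_kernel_subgroup] by blast
  have "T a h = T (a \<otimes> inv a') (T a' h)" using assms(1,2) T_mult[of "a \<otimes> inv a'" a' h] by (simp add: m_assoc)
  also have "\<dots> = T a' h" using k T_pos_eigen[OF assms(2) h] by (simp add: pos_eigen_kernel_def)
  finally show ?thesis .
qed

lemma T_commute_if_central_mod:
  assumes r: "r \<in> carrier G" and cen: "central_mod G (pos_eigen_kernel lam) r"
    and g: "g \<in> carrier G" and h: "h \<in> pos_eigen lam"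
  shows "T g (T r h) = T r (T g h)"
proof -
  have "g \<otimes> r \<otimes> inv (r \<otimes> g) \<in> pos_eigen_kernel lam"
    using cen g r by (simp add: central_mod_def inv_mult_group m_assoc)
  then have "T (g \<otimes> r) h = T (r \<otimes> g) h"
    using g r h rcos_eq_iff[OF pos_eigen_kernel_subgroup] by (intro T_eq_if_rcos_eq) auto
  then show ?thesis using g r by (simp add: T_mult)
qed

lemma eigenvalue_pos:
  assumes "r \<in> carrier G" "h \<in> pos_eigen lam" "T r h = (\<lambda>z. \<alpha> * h z)"
  shows "\<alpha> > 0"
  using pos_eigen_pos[OF T_pos_eigen[OF assms(1,2)], of z] pos_eigen_pos[OF assms(2), of z] assms(3)
  by (simp add: zero_less_mult_iff)

lemma T_inv_eigen:
  assumes r: "r \<in> carrier G" and h: "h \<in> pos_eigen lam" and e: "T r h = (\<lambda>z. \<alpha> * h z)"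
  shows "T (inv r) h = (\<lambda>z. (1 / \<alpha>) * h z)"
proof -
  have "\<alpha> > 0" by (rule eigenvalue_pos[OF r h e])
  moreover have "h = (\<lambda>z. \<alpha> * T (inv r) h z)"
    using r T_mult[of "inv r" r h] by (simp add: e T_scale)
  ultimately show ?thesis by (auto simp: fun_eq_iff field_simps dest: fun_cong)
qed

lemma T_nat_pow_eigen:
  assumes w: "w \<in> carrier G" and e: "T w h = (\<lambda>z. \<alpha> * h z)"
  shows "T (w [^] (k::nat)) h = (\<lambda>z. \<alpha> ^ k * h z)"
proof (induction k)
  case (Suc k)
  have "T (w [^] Suc k) h = T (w [^] k) (T w h)" using w by (simp add: T_mult nat_pow_Suc)
  then show ?case using Suc by (simp add: e T_scale mult.assoc)
qed simp

definition harnack_bound :: "real \<Rightarrow> 'x \<Rightarrow> 'g \<Rightarrow> real \<Rightarrow> bool" where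
  "harnack_bound lam v g C \<longleftrightarrow> 0 \<le> C \<and> (\<forall>h\<in>pos_eigen lam. h (\<phi> g v) \<le> C * h v)"

lemma harnack_bound_exists: "\<exists>C. harnack_bound lam v g C"
  using harnack_inequality[of lam "\<phi> g v" v] by (auto simp: harnack_bound_def pos_eigen_def)

lemma harnack_bound_mult:
  assumes g: "g \<in> carrier G" and g': "g' \<in> carrier G"
    and C1: "harnack_bound lam v g C1" and C2: "harnack_bound lam v g' C2"
  shows "harnack_bound lam v (g \<otimes> g') (C1 * C2)"
  unfolding harnack_bound_def
proof (intro conjI ballI)
  show "0 \<le> C1 * C2" using C1 C2 by (simp add: harnack_bound_def)
  fix h assume h: "h \<in> pos_eigen lam"
  have "h (\<phi> (g \<otimes> g') v) = T (inv g) h (\<phi> g' v)"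
    using g g' by (simp add: action_mult T_inv_apply)
  also have "\<dots> \<le> C2 * T (inv g) h v"
    using C2 T_pos_eigen[OF _ h, of "inv g"] g by (simp add: harnack_bound_def)
  also have "\<dots> \<le> C2 * (C1 * h v)"
    using C1 C2 h g by (intro mult_left_mono) (auto simp: harnack_bound_def T_inv_apply)
  finally show "h (\<phi> (g \<otimes> g') v) \<le> C1 * C2 * h v" by (simp add: algebra_simps)
qed

lemma harnack_bound_nat_pow:
  assumes g: "g \<in> carrier G" and C: "harnack_bound lam v g C"
  shows "harnack_bound lam v (g [^] (n::nat)) (C ^ n)"
proof (induction n)
  case 0
  then show ?case by (simp add: harnack_bound_def)
next
  case (Suc n)
  then show ?case using harnack_bound_mult[OF _ g Suc C] g by (simp add: nat_pow_Suc mult.commute)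
qed

lemma T_commutator_nat_pow:
  assumes x: "x \<in> carrier G" and y: "y \<in> carrier G"
    and cen: "central_mod G (pos_eigen_kernel lam) (commutator G x y)" and h: "h \<in> pos_eigen lam"
  shows "T (commutator G x y [^] ((n::nat) * n)) h = T (commutator G (x [^] n) (y [^] n)) h"
  using normal.rcos_commutator_nat_pow[OF pos_eigen_kernel_normal x y cen] x y h
  by (intro T_eq_if_rcos_eq) auto

text \<open>The commutator \<open>[x\<^sup>n, y\<^sup>n]\<close> is a word of length \<open>4n\<close> in \<open>x, y\<close> and their inverses, so by
  Harnack it moves positive solutions by a factor at most exponential in \<open>n\<close>;
  but it acts like \<open>[x, y]\<^bsup>n\<^sup>2\<^esup>\<close>, i.e. by the factor \<open>\<alpha>\<^bsup>n\<^sup>2\<^esup>\<close>.\<close>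

lemma central_commutator_eigenvalue_le_one:
  assumes x: "x \<in> carrier G" and y: "y \<in> carrier G"
    and cen: "central_mod G (pos_eigen_kernel lam) (commutator G x y)"
    and h: "h \<in> pos_eigen lam" and e: "T (commutator G x y) h = (\<lambda>z. \<alpha> * h z)"
  shows "\<alpha> \<le> 1"
proof (rule ccontr)
  assume "\<not> \<alpha> \<le> 1"
  then have \<alpha>: "\<alpha> > 1" by simp
  fix v :: 'x
  obtain Cx Cy Cx' Cy' where C: "harnack_bound lam v x Cx" "harnack_bound lam v y Cy"
    "harnack_bound lam v (inv x) Cx'" "harnack_bound lam v (inv y) Cy'"
    using harnack_bound_exists by meson
  define D where "D = Cy * Cx * Cy' * Cx'"
  have D: "D \<ge> 0" using C by (simp add: harnack_bound_def D_def)
  have bound: "\<alpha> ^ (n * n) \<le> D ^ n" for n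
  proof -
    define q where "q = commutator G (x [^] n) (y [^] n)"
    have "inv q = y [^] n \<otimes> x [^] n \<otimes> inv y [^] n \<otimes> inv x [^] n"
      unfolding q_def using x y by (simp add: inv_mult_group nat_pow_inv m_assoc)
    then have "harnack_bound lam v (inv q) (Cy ^ n * Cx ^ n * Cy' ^ n * Cx' ^ n)"
      using x y by (simp only:) (intro harnack_bound_mult harnack_bound_nat_pow C; simp)
    then have q: "harnack_bound lam v (inv q) (D ^ n)" by (simp add: D_def power_mult_distrib)
    have "\<alpha> ^ (n * n) * h v = T (commutator G x y [^] (n * n)) h v"
      using T_nat_pow_eigen[OF _ e] x y by simp
    also have "\<dots> = h (\<phi> (inv q) v)"
      unfolding q_def T_commutator_nat_pow[OF x y cen h] by (simp add: T_apply)
    also have "\<dots> \<le> D ^ n * h v" using q h by (simp add: harnack_bound_def)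
    finally show ?thesis using pos_eigen_pos[OF h, of v] by simp
  qed
  obtain n where n: "max D 1 < \<alpha> ^ n" using real_arch_pow[OF \<alpha>] by blast
  then have "n > 0" by (cases n) auto
  have "(\<alpha> ^ n) ^ Suc (n - 1) \<le> D ^ Suc (n - 1)" using bound[of n] \<open>n > 0\<close> by (simp add: power_mult)
  then have "\<alpha> ^ n \<le> D" using D by (rule power_le_imp_le_base)
  then show False using n by simp
qed

lemma T_eigen_if_le_and_eq_at:
  assumes r: "r \<in> carrier G" and k: "k \<in> pos_eigen lam" and le: "\<And>p. T r k p \<le> M * k p" and eq: "T r k v = M * k v"
  shows "T r k = (\<lambda>p. M * k p)"
proof -
  define u where "u p = M * k p + (- 1) * T r k p" for p
  have "eigen_eq lam u"
    unfolding u_def using k eigen_eq_T[OF r] by (intro eigen_eq_lincomb) (auto simp: pos_eigen_def)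
  moreover have "\<forall>p. 0 \<le> u p" "u v = 0" using le eq by (auto simp: u_def)
  ultimately have "u p = 0" for p by (intro eigen_eq_nonneg_vanishes)
  then show ?thesis by (simp add: u_def fun_eq_iff)
qed

context
  fixes r lam
  assumes r: "r \<in> carrier G"
    and commute: "\<And>g h. g \<in> carrier G \<Longrightarrow> h \<in> pos_eigen lam \<Longrightarrow> T g (T r h) = T r (T g h)"
begin

lemma T_commuting_at_action:
  "g \<in> carrier G \<Longrightarrow> f \<in> pos_eigen lam \<Longrightarrow> T r f (\<phi> g p) = T r (T (inv g) f) p"
  using commute[of "inv g" f] by (simp flip: T_inv_apply)

lemma T_commuting_ratio_bdd_above:
  assumes f: "f \<in> pos_eigen lam"
  shows "bdd_above ((\<lambda>g. T r f (\<phi> g v) / f (\<phi> g v)) ` carrier G)"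
proof -
  obtain C where C: "\<forall>u. eigen_eq lam u \<longrightarrow> (\<forall>x. 0 \<le> u x) \<longrightarrow> u (\<phi> (inv r) v) \<le> C * u v"
    using harnack_inequality by blast
  have "T r f (\<phi> g v) / f (\<phi> g v) \<le> C" if g: "g \<in> carrier G" for g
  proof -
    have "T r f (\<phi> g v) = T (inv g) f (\<phi> (inv r) v)"
      using T_commuting_at_action[OF g f] by (simp add: T_apply)
    also have "\<dots> \<le> C * T (inv g) f v" using C T_pos_eigen[OF _ f, of "inv g"] g by (simp add: pos_eigen_def)
    finally show ?thesis
      using g pos_eigen_pos[OF f, of "\<phi> g v"] by (simp add: T_inv_apply divide_le_eq)
  qed
  then show ?thesis by (auto simp: bdd_above_def)
qed

text \<open>By cocompactness the supremum \<open>M\<close> of \<open>T\<^sub>r f / f\<close> is approached along translates of a single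
  vertex \<open>v\<close> of the finite fundamental set.\<close>

lemma T_commuting_ratio_sup:
  assumes f: "f \<in> pos_eigen lam"
  obtains M gs v where "\<And>p. T r f p \<le> M * f p" and "\<And>n. gs n \<in> carrier G"
    and "\<And>n. M - 1 / (real n + 1) < T r f (\<phi> (gs n) v) / f (\<phi> (gs n) v)"
proof -
  obtain V where V: "finite V" "(\<Union>g\<in>carrier G. \<phi> g ` V) = UNIV"
    using cocompact by (auto simp: cocompact_def)
  define \<rho> where "\<rho> p = T r f p / f p" for p
  have bdd: "bdd_above ((\<lambda>g. \<rho> (\<phi> g v)) ` carrier G)" for v
    unfolding \<rho>_def by (rule T_commuting_ratio_bdd_above[OF f])
  define M where "M = Max ((\<lambda>v. SUP g\<in>carrier G. \<rho> (\<phi> g v)) ` V)"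
  have "V \<noteq> {}" using V by auto
  then have "M \<in> (\<lambda>v. SUP g\<in>carrier G. \<rho> (\<phi> g v)) ` V" unfolding M_def using V by (intro Max_in) auto
  then obtain v where v: "v \<in> V" "M = (SUP g\<in>carrier G. \<rho> (\<phi> g v))" by blast
  have "\<rho> p \<le> M" for p
  proof -
    obtain g w where "g \<in> carrier G" "w \<in> V" "p = \<phi> g w" using V(2) by blast
    then have "\<rho> p \<le> (SUP g\<in>carrier G. \<rho> (\<phi> g w))" using bdd by (auto intro: cSUP_upper)
    also have "\<dots> \<le> M" unfolding M_def using V \<open>w \<in> V\<close> by simp
    finally show ?thesis .
  qed
  then have le: "T r f p \<le> M * f p" for p using pos_eigen_pos[OF f, of p] by (simp add: \<rho>_def divide_le_eq)
  have "\<exists>g\<in>carrier G. M - 1 / (real n + 1) < \<rho> (\<phi> g v)" for n :: nat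
  proof -
    have "M - 1 / (real n + 1) < (SUP g\<in>carrier G. \<rho> (\<phi> g v))" using v(2) by simp
    then show ?thesis by (subst (asm) less_cSUP_iff[OF _ bdd]) auto
  qed
  then have "\<forall>n. \<exists>g. g \<in> carrier G \<and> M - 1 / (real n + 1) < \<rho> (\<phi> g v)" by blast
  then obtain gs where "\<forall>n. gs n \<in> carrier G \<and> M - 1 / (real n + 1) < \<rho> (\<phi> (gs n) v)"
    using choice[of "\<lambda>n g. g \<in> carrier G \<and> M - 1 / (real n + 1) < \<rho> (\<phi> g v)"] by blast
  then show ?thesis by (intro that[OF le, where v = v and gs = gs]) (auto simp: \<rho>_def)
qed

text \<open>Normalising the translates of \<open>f\<close> that nearly realise \<open>M\<close> and passing to a limit gives a
  positive solution \<open>k\<close> with \<open>T\<^sub>r k \<le> M k\<close> and equality at \<open>v\<close>; by the minimum principle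
  \<open>T\<^sub>r k = M k\<close>, so \<open>M\<close> is an eigenvalue of \<open>T\<^sub>r\<close> and hence at most \<open>1\<close>.\<close>

lemma T_commuting_le_if_eigenvalues_le_one:
  assumes eigenvalues: "\<And>h \<alpha>. h \<in> pos_eigen lam \<Longrightarrow> T r h = (\<lambda>z. \<alpha> * h z) \<Longrightarrow> \<alpha> \<le> 1"
    and f: "f \<in> pos_eigen lam"
  shows "T r f p \<le> f p"
proof -
  obtain M gs v where M: "\<And>p. T r f p \<le> M * f p" and gs: "\<And>n. gs n \<in> carrier G"
    and near: "\<And>n. M - 1 / (real n + 1) < T r f (\<phi> (gs n) v) / f (\<phi> (gs n) v)"
    using T_commuting_ratio_sup[OF f] by auto
  define k where "k n = (\<lambda>p. (1 / f (\<phi> (gs n) v)) * T (inv (gs n)) f p)" for n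
  have k: "k n \<in> pos_eigen lam" for n
    unfolding k_def using pos_eigen_pos[OF f] gs T_pos_eigen[OF _ f] by (intro pos_eigen_scale) auto
  have kv: "k n v = 1" for n
    unfolding k_def using gs pos_eigen_pos[OF f, of "\<phi> (gs n) v"] by (simp add: T_inv_apply)
  have Tk: "T r (k n) p = T r f (\<phi> (gs n) p) / f (\<phi> (gs n) v)" for n p
    unfolding k_def using T_commuting_at_action[OF gs f] by (simp add: T_apply)
  have Tk_le: "T r (k n) p \<le> M * k n p" for n p
  proof -
    have "T r (k n) p \<le> M * f (\<phi> (gs n) p) / f (\<phi> (gs n) v)"
      unfolding Tk using M[of "\<phi> (gs n) p"] pos_eigen_pos[OF f, of "\<phi> (gs n) v"]
      by (simp add: divide_right_mono)
    also have "\<dots> = M * k n p" using gs by (simp add: k_def T_inv_apply)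
    finally show ?thesis .
  qed
  have Tk_v: "M - 1 / (real n + 1) < T r (k n) v" for n using near by (simp add: Tk)
  obtain s kinf where s: "strict_mono s" and lim: "\<And>p. (\<lambda>n. k (s n) p) \<longlonglongrightarrow> kinf p"
    and kinf: "kinf \<in> pos_eigen lam" "kinf v = 1"
    using pos_eigen_normalised_convergent_subseq[of k lam v, OF k kv] by auto
  have T_lim: "(\<lambda>n. T r (k (s n)) p) \<longlonglongrightarrow> T r kinf p" for p
    unfolding T_apply using lim by simp
  have le: "T r kinf p \<le> M * kinf p" for p
    using Tk_le by (intro LIMSEQ_le[OF T_lim tendsto_mult_left[OF lim]]) auto
  have "(\<lambda>n. M - 1 / (real (s n) + 1)) \<longlonglongrightarrow> M - 0"
    using LIMSEQ_subseq_LIMSEQ[OF LIMSEQ_inverse_real_of_nat s]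
    by (intro tendsto_diff tendsto_const) (simp add: o_def inverse_eq_divide add.commute)
  moreover have "\<forall>n. M - 1 / (real (s n) + 1) \<le> T r (k (s n)) v"
    using Tk_v less_imp_le by blast
  ultimately have "M \<le> T r kinf v" using LIMSEQ_le[OF _ T_lim] by auto
  then have eq_v: "T r kinf v = M * kinf v" using le[of v] kinf by simp
  then have "T r kinf = (\<lambda>p. M * kinf p)" using T_eigen_if_le_and_eq_at[OF r kinf(1) le] by blast
  then have "M \<le> 1" by (rule eigenvalues[OF kinf(1)])
  then have "M * f p \<le> f p" using pos_eigen_pos[OF f, of p] by (simp add: mult_le_cancel_right1)
  then show ?thesis using M[of p] by simp
qed

end

lemma mem_kernel_if_central_eigenvalues_one:
  assumes r: "r \<in> carrier G" and cen: "central_mod G (pos_eigen_kernel lam) r"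
    and eig: "\<And>h \<alpha>. h \<in> pos_eigen lam \<Longrightarrow> T r h = (\<lambda>z. \<alpha> * h z) \<Longrightarrow> \<alpha> = 1"
  shows "r \<in> pos_eigen_kernel lam"
proof -
  have ri: "inv r \<in> carrier G" using r by simp
  have eig_inv: "\<alpha> \<le> 1" if h: "h \<in> pos_eigen lam" and e: "T (inv r) h = (\<lambda>z. \<alpha> * h z)" for h \<alpha>
  proof -
    have "T r h = (\<lambda>z. (1 / \<alpha>) * h z)" using T_inv_eigen[OF ri h e] r by simp
    then have "1 / \<alpha> = 1" by (rule eig[OF h])
    then show ?thesis by (cases "\<alpha> = 0") auto
  qed
  have "T r f = f" if f: "f \<in> pos_eigen lam" for f
  proof
    fix p
    have le: "T r f q \<le> f q" for q
      using T_commuting_le_if_eigenvalues_le_one[OF r T_commute_if_central_mod[OF r cen] _ f] eig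
      by fastforce
    have le_inv: "T (inv r) f q \<le> f q" for q
      using T_commuting_le_if_eigenvalues_le_one[OF ri
          T_commute_if_central_mod[OF ri normal.central_mod_inv[OF pos_eigen_kernel_normal r cen]]
          eig_inv f] .
    have "f p = T (inv r) f (\<phi> (inv r) p)" using r T_mult[of r "inv r" f] by (simp add: T_apply)
    also have "\<dots> \<le> T r f p" using le_inv by (simp add: T_apply)
    finally show "T r f p = f p" using le[of p] by simp
  qed
  then show ?thesis using r by (simp add: pos_eigen_kernel_def)
qed

lemma central_commutator_mem_kernel:
  assumes x: "x \<in> carrier G" and y: "y \<in> carrier G"
    and cen: "central_mod G (pos_eigen_kernel lam) (commutator G x y)"
  shows "commutator G x y \<in> pos_eigen_kernel lam"
proof (rule mem_kernel_if_central_eigenvalues_one[OF _ cen])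
  show w: "commutator G x y \<in> carrier G" using x y by simp
  fix h \<alpha> assume h: "h \<in> pos_eigen lam" and e: "T (commutator G x y) h = (\<lambda>z. \<alpha> * h z)"
  have "inv (commutator G x y) = commutator G y x" using x y by (simp add: inv_mult_group m_assoc)
  then have "T (commutator G y x) h = (\<lambda>z. (1 / \<alpha>) * h z)" using T_inv_eigen[OF w h e] by simp
  moreover have "central_mod G (pos_eigen_kernel lam) (commutator G y x)"
    using normal.central_mod_inv[OF pos_eigen_kernel_normal w cen] \<open>inv _ = _\<close> by simp
  ultimately have "1 / \<alpha> \<le> 1" using central_commutator_eigenvalue_le_one[OF y x _ h] by blast
  moreover have "\<alpha> \<le> 1" by (rule central_commutator_eigenvalue_le_one[OF x y cen h e])
  moreover have "\<alpha> > 0" by (rule eigenvalue_pos[OF w h e])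
  ultimately show "\<alpha> = 1" by (simp add: divide_le_eq)
qed

lemma H_op_point_mass:
  assumes "x \<noteq> y"
  shows "H_op b c (\<lambda>z. if z = y then 1 else 0) x = - b x y"
proof -
  have "(\<Sum>z\<in>neighbours x. b x z * (if z = y then 1 else 0)) = b x y"
    using finite_neighbours[of x] weight_eq_zero_if_not_neighbour[of y x]
    by (simp add: if_distrib[of "(*) _"] sum.delta cong: if_cong)
  then show ?thesis using assms by (simp add: H_op_eq)
qed

text \<open>The weights are recovered from \<open>H\<close> by testing on point masses, so invariance of \<open>H\<close>
  gives invariance of the off-diagonal weights.\<close>

lemma weight_invariant:
  assumes g: "g \<in> carrier G" and xy: "x \<noteq> y"
  shows "b (\<phi> g x) (\<phi> g y) = b x y"
proof -
  define \<delta> where "\<delta> = (\<lambda>z. if z = y then 1 else (0::real))"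
  have "T g \<delta> = (\<lambda>z. if z = \<phi> g y then 1 else 0)"
    using g by (auto simp: \<delta>_def T_apply fun_eq_iff)
  moreover have "\<phi> g x \<noteq> \<phi> g y" using xy g action_inv_cancel by metis
  ultimately have "H_op b c (T g \<delta>) (\<phi> g x) = - b (\<phi> g x) (\<phi> g y)" by (simp add: H_op_point_mass)
  moreover have "H_op b c (T g \<delta>) (\<phi> g x) = - b x y"
    using g H_op_point_mass[OF xy] by (simp add: H_op_T T_apply \<delta>_def)
  ultimately show ?thesis by simp
qed

lemma translates_cover_if_neighbours_covered:
  assumes \<Gamma>: "subgroup \<Gamma> G" and w0: "w0 \<in> V"
    and nb: "\<And>w u. w \<in> V \<Longrightarrow> b w u > 0 \<Longrightarrow> u \<in> (\<Union>\<gamma>\<in>\<Gamma>. \<phi> \<gamma> ` V)"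
  shows "p \<in> (\<Union>\<gamma>\<in>\<Gamma>. \<phi> \<gamma> ` V)"
proof -
  have "(\<lambda>u v. 0 < b u v)\<^sup>*\<^sup>* w0 p" using connected by (simp add: graph_connected_def)
  then show ?thesis
  proof (induction rule: rtranclp_induct)
    case base
    then show ?case using w0 subgroup.one_closed[OF \<Gamma>] by force
  next
    case (step p q)
    then obtain \<gamma> w where \<gamma>: "\<gamma> \<in> \<Gamma>" "w \<in> V" "p = \<phi> \<gamma> w" by blast
    have \<gamma>C: "\<gamma> \<in> carrier G" using subgroup.mem_carrier[OF \<Gamma> \<gamma>(1)] .
    show ?case
    proof (cases "q = p")
      case False
      then have "b w (\<phi> (inv \<gamma>) q) = b p q"
        using weight_invariant[of "inv \<gamma>" p q] \<gamma> \<gamma>C by simp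
      then obtain \<gamma>' w' where \<gamma>': "\<gamma>' \<in> \<Gamma>" "w' \<in> V" "\<phi> (inv \<gamma>) q = \<phi> \<gamma>' w'"
        using nb[OF \<gamma>(2)] step(2) by force
      have "q = \<phi> \<gamma> (\<phi> (inv \<gamma>) q)" using \<gamma>C by simp
      also have "\<dots> = \<phi> (\<gamma> \<otimes> \<gamma>') w'"
        using \<gamma>' \<gamma>C subgroup.mem_carrier[OF \<Gamma>] by (simp add: action_mult)
      finally show ?thesis using \<gamma> \<gamma>' subgroup.m_closed[OF \<Gamma>] by blast
    qed (use step.IH in blast)
  qed
qed

lemma generate_finite_union_stabilizers:
  "\<exists>F. finite F \<and> F \<subseteq> carrier G \<and> generate G (F \<union> (\<Union>x. stabilizer G \<phi> x)) = carrier G"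
proof -
  let ?S = "\<Union>x. stabilizer G \<phi> x"
  obtain V where V: "finite V" "(\<Union>g\<in>carrier G. \<phi> g ` V) = UNIV"
    using cocompact by (auto simp: cocompact_def)
  then obtain w0 where w0: "w0 \<in> V" by blast
  have "\<forall>u. \<exists>g\<in>carrier G. u \<in> \<phi> g ` V" using V(2) by blast
  then obtain rep where rep: "\<And>u. rep u \<in> carrier G" "\<And>u. u \<in> \<phi> (rep u) ` V" by metis
  have "\<forall>w\<in>V \<inter> orbit G \<phi> w0. \<exists>t\<in>carrier G. \<phi> t w0 = w" by (auto simp: orbit_def)
  then obtain tr where tr: "\<And>w. w \<in> V \<inter> orbit G \<phi> w0 \<Longrightarrow> tr w \<in> carrier G \<and> \<phi> (tr w) w0 = w"
    by metis
  define F where "F = rep ` (\<Union>w\<in>V. neighbours w) \<union> tr ` (V \<inter> orbit G \<phi> w0)"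
  have F: "finite F" "F \<subseteq> carrier G" using V(1) finite_neighbours rep tr by (auto simp: F_def)
  define \<Gamma> where "\<Gamma> = generate G (F \<union> ?S)"
  have \<Gamma>: "subgroup \<Gamma> G" unfolding \<Gamma>_def using F
    by (intro generate_is_subgroup) (auto simp: stabilizer_def)
  have F\<Gamma>: "F \<subseteq> \<Gamma>" and S\<Gamma>: "?S \<subseteq> \<Gamma>" by (auto simp: \<Gamma>_def intro: generate.incl)
  have cover: "p \<in> (\<Union>\<gamma>\<in>\<Gamma>. \<phi> \<gamma> ` V)" for p
  proof (rule translates_cover_if_neighbours_covered[OF \<Gamma> w0])
    fix w u assume "w \<in> V" "b w u > 0"
    then have "rep u \<in> \<Gamma>" using F\<Gamma> by (auto simp: F_def neighbours_def)
    then show "u \<in> (\<Union>\<gamma>\<in>\<Gamma>. \<phi> \<gamma> ` V)" using rep(2)[of u] by blast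
  qed
  have "g \<in> \<Gamma>" if g: "g \<in> carrier G" for g
  proof -
    obtain \<gamma> w where \<gamma>: "\<gamma> \<in> \<Gamma>" "w \<in> V" "\<phi> g w0 = \<phi> \<gamma> w" using cover[of "\<phi> g w0"] by blast
    have \<gamma>C: "\<gamma> \<in> carrier G" using subgroup.mem_carrier[OF \<Gamma> \<gamma>(1)] .
    have "\<phi> (inv \<gamma> \<otimes> g) w0 = w" using \<gamma> \<gamma>C g by (simp add: action_mult)
    then have "w \<in> V \<inter> orbit G \<phi> w0" using \<gamma>C g \<gamma>(2) by (auto simp: orbit_def)
    then have t: "tr w \<in> \<Gamma>" "tr w \<in> carrier G" "\<phi> (tr w) w0 = w" using tr F\<Gamma> by (auto simp: F_def)
    define e where "e = \<gamma> \<otimes> tr w"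
    have e: "e \<in> \<Gamma>" "e \<in> carrier G" using \<gamma> \<gamma>C t subgroup.m_closed[OF \<Gamma>] by (auto simp: e_def)
    have "\<phi> (inv (tr w)) w = w0" using action_inv_cancel[OF t(2), of w0] t(3) by simp
    then have "\<phi> (inv e \<otimes> g) w0 = w0" using \<gamma> \<gamma>C t g by (simp add: e_def action_mult inv_mult_group)
    then have "inv e \<otimes> g \<in> stabilizer G \<phi> w0" using e g by (simp add: stabilizer_def)
    then have "inv e \<otimes> g \<in> \<Gamma>" using S\<Gamma> by blast
    then have "e \<otimes> (inv e \<otimes> g) \<in> \<Gamma>" using e subgroup.m_closed[OF \<Gamma>] by blast
    then show ?thesis using e g by simp
  qed
  then have "\<Gamma> = carrier G" using subgroup.subset[OF \<Gamma>] by blast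
  then show ?thesis using F unfolding \<Gamma>_def by blast
qed

context
  assumes nilpotent: "nilpotent_group G"
begin

lemma lower_central_one_subset_kernel: "lower_central G 1 \<subseteq> pos_eigen_kernel lam"
  using nilpotent pos_eigen_kernel_subgroup central_commutator_mem_kernel
  by (rule nilpotent_lower_central_one_subset)

lemma central_mod_kernel: "g \<in> carrier G \<Longrightarrow> central_mod G (pos_eigen_kernel lam) g"
  using commutator_in_lower_central[of _ g 0] lower_central_one_subset_kernel
  by (auto simp: central_mod_def)

lemma stabilizer_subset_kernel: "stabilizer G \<phi> x \<subseteq> pos_eigen_kernel lam"
proof
  fix s assume "s \<in> stabilizer G \<phi> x"
  then have s: "s \<in> carrier G" "\<phi> s x = x" by (auto simp: stabilizer_def)
  show "s \<in> pos_eigen_kernel lam"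
  proof (rule mem_kernel_if_central_eigenvalues_one[OF s(1) central_mod_kernel[OF s(1)]])
    fix h \<alpha> assume h: "h \<in> pos_eigen lam" and e: "T s h = (\<lambda>z. \<alpha> * h z)"
    have "T s h x = h x" using s action_inv_cancel[OF s(1), of x] by (simp add: T_apply)
    then show "\<alpha> = 1" using e pos_eigen_pos[OF h, of x] by simp
  qed
qed

lemma isolator_kernel_subset: "isolator G (pos_eigen_kernel lam) \<subseteq> pos_eigen_kernel lam"
proof
  fix g assume "g \<in> isolator G (pos_eigen_kernel lam)"
  then obtain n :: nat where g: "g \<in> carrier G" "n > 0" "g [^] n \<in> pos_eigen_kernel lam"
    by (auto simp: isolator_def)
  show "g \<in> pos_eigen_kernel lam"
  proof (rule mem_kernel_if_central_eigenvalues_one[OF g(1) central_mod_kernel[OF g(1)]])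
    fix h \<alpha> assume h: "h \<in> pos_eigen lam" and e: "T g h = (\<lambda>z. \<alpha> * h z)"
    have "T (g [^] n) h = h" using g(3) h by (simp add: pos_eigen_kernel_def)
    then have "(\<lambda>z. \<alpha> ^ n * h z) = h" using T_nat_pow_eigen[OF g(1) e, of n] by simp
    from fun_cong[OF this, of z] have "\<alpha> ^ n = 1 ^ n" using pos_eigen_pos[OF h, of z] by simp
    then show "\<alpha> = 1"
      by (rule power_eq_imp_eq_base) (use eigenvalue_pos[OF g(1) h e] g(2) in auto)
  qed
qed

end


definition commutator_stabilizer_subgroup :: "'g set" where
  "commutator_stabilizer_subgroup = generate G (lower_central G 1 \<union> (\<Union>x. stabilizer G \<phi> x))"

definition invariance_subgroup :: "'g set" where
  "invariance_subgroup = isolator G commutator_stabilizer_subgroup"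

lemma commutator_stabilizer_subgroup:
  shows "subgroup commutator_stabilizer_subgroup G"
    and "lower_central G 1 \<subseteq> commutator_stabilizer_subgroup"
    and "stabilizer G \<phi> x \<subseteq> commutator_stabilizer_subgroup"
proof -
  have "(\<Union>x. stabilizer G \<phi> x) \<subseteq> carrier G" by (auto simp: stabilizer_def)
  then show "subgroup commutator_stabilizer_subgroup G"
    unfolding commutator_stabilizer_subgroup_def using lower_central_subset_carrier[of 1]
    by (intro generate_is_subgroup) (auto simp del: lower_central.simps)
qed (auto simp: commutator_stabilizer_subgroup_def simp del: lower_central.simps intro: generate.incl)

lemma invariance_subgroup_normal: "invariance_subgroup \<lhd> G"
  unfolding invariance_subgroup_def using commutator_stabilizer_subgroup(1,2) by (rule isolator_normal)

lemma stabilizer_subset_invariance_subgroup: "stabilizer G \<phi> x \<subseteq> invariance_subgroup"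
  unfolding invariance_subgroup_def
  using commutator_stabilizer_subgroup subset_isolator[OF commutator_stabilizer_subgroup(1,2)] by blast

lemma invariance_subgroup_subset_kernel:
  assumes "nilpotent_group G" shows "invariance_subgroup \<subseteq> pos_eigen_kernel lam"
proof -
  have "commutator_stabilizer_subgroup \<subseteq> pos_eigen_kernel lam"
    unfolding commutator_stabilizer_subgroup_def
    using lower_central_one_subset_kernel[OF assms] stabilizer_subset_kernel[OF assms]
    by (intro generate_subgroup_incl pos_eigen_kernel_subgroup) blast
  then show ?thesis
    unfolding invariance_subgroup_def using isolator_mono isolator_kernel_subset[OF assms] by blast
qed

lemma Mod_invariance_subgroup_iso_free_Abelian_group:
  "\<exists>d::nat. G Mod invariance_subgroup \<cong> free_Abelian_group {..<d}"
proof -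
  let ?R = invariance_subgroup
  interpret R: normal ?R G by (rule invariance_subgroup_normal)
  interpret Q: comm_group "G Mod ?R"
    unfolding invariance_subgroup_def using commutator_stabilizer_subgroup(1,2)
    by (rule comm_group_Mod_isolator)
  obtain F where F: "finite F" "F \<subseteq> carrier G" "generate G (F \<union> (\<Union>x. stabilizer G \<phi> x)) = carrier G"
    using generate_finite_union_stabilizers by blast
  have "generate (G Mod ?R) ((\<lambda>a. ?R #> a) ` F) = carrier (G Mod ?R)"
    using F stabilizer_subset_invariance_subgroup by (intro R.generate_FactGroup_image) auto
  then have "finite_generating_set (G Mod ?R) ((\<lambda>a. ?R #> a) ` F)"
    using F by (auto simp: finite_generating_set_def carrier_FactGroup)
  moreover have "torsion_free (G Mod ?R)"
    unfolding invariance_subgroup_def using commutator_stabilizer_subgroup(1,2)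
    by (rule torsion_free_Mod_isolator)
  ultimately show ?thesis by (intro Q.torsion_free_finitely_generated_iso_free_Abelian_group)
qed

end

theorem lemma11:
  fixes G :: "'g monoid" and \<phi> :: "'g \<Rightarrow> 'x \<Rightarrow> 'x"
    and b :: "'x \<Rightarrow> 'x \<Rightarrow> real" and c :: "'x \<Rightarrow> real"
  assumes "countable (UNIV :: 'x set)"
    and "graph b c" and "locally_finite b" and "graph_connected b"
    and "nilpotent_group G"
    and "group_action G UNIV \<phi>"
    and "cocompact G \<phi>"
    and "G_invariant G \<phi> b c"
  shows "\<exists>R. R \<lhd> G
           \<and> (\<forall>f\<in>pos_eigenfunctions b c. R_invariant G \<phi> R f)
           \<and> (\<exists>d::nat. G Mod R \<cong> free_Abelian_group {..<d})
           \<and> (\<forall>x. stabilizer G \<phi> x \<subseteq> R)"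
proof -
  interpret invariant_graph_action b c G \<phi>
    by (intro invariant_graph_action.intro connected_locally_finite_graph.intro
        invariant_graph_action_axioms.intro) (use assms in \<open>auto simp: graph_def\<close>)
  have "R_invariant G \<phi> invariance_subgroup f" if "f \<in> pos_eigenfunctions b c" for f
    using that invariance_subgroup_subset_kernel[OF assms(5)]
    by (auto simp: pos_eigenfunctions_eq R_invariant_def pos_eigen_kernel_def)
  then show ?thesis
    using invariance_subgroup_normal Mod_invariance_subgroup_iso_free_Abelian_group
      stabilizer_subset_invariance_subgroup by blast
qed

end
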